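(* There exists $c<\infty$ such that the following holds. Let $U\in\mathbb R$, let $K$ be a hull with $r=r_K<1/2$, let $z=x+iy\in\mathbb H$, and write $f=f_{K+U}$, $h=h_K$. Then $\operatorname{Im}[f(z)]\ge y$. Moreover, if $\delta=r^{1/4}$ and $y\ge\delta$, then \[\Big|f(z)-z+\frac{h}{z-U}\Big|\le ch\delta^2,\qquad \Big|f'(z)-1-\frac{h}{(z-U)^2}\Big|\le ch\delta,\] \[\Big|\operatorname{Im}[f(z)]-y\Big[1+\frac{h}{|z-U|^2}\Big]\Big|\le cyh\delta.\]
   Context: A (compact $\mathbb H$-)hull is a bounded, relatively closed set $K\subset\mathbb H$ such that $\mathbb H\setminus K$ is simply connected; $g_K:\mathbb H\setminus K\to\mathbb H$ is the conformal map with $g_K(z)=z+h_K/z+O(|z|^{-2})$ at $\infty$, $h_K=\operatorname{hcap}(K)$, $r_K=\sup\{|z|:z\in K\}$. $f_K=g_K^{-1}:\mathbb H\to\mathbb H\setminus K$, so $f_K(z)=z-h_K/z+o(|z|^{-1})$. For $U\in\mathbb R$, $K+U$ denotes the translate and $h_{K+U}=h_K$. *)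

theory Defs
  imports "HOL-Analysis.Analysis"
begin

definition upper_half :: "complex set" where
  "upper_half = {z. Im z > 0}"

definition is_hull :: "complex set \<Rightarrow> bool" where
  "is_hull K \<longleftrightarrow> K \<subseteq> upper_half \<and> bounded K \<and> closedin (top_of_set upper_half) K
     \<and> simply_connected (upper_half - K)"

definition hull_rad :: "complex set \<Rightarrow> real" where
  "hull_rad K = (if K = {} then 0 else Sup (norm ` K))"

text \<open>g is the conformal map from H - K onto H with hydrodynamic normalization
  g(z) = z + h/z + O(|z|^-2) at infinity; h is then the half-plane capacity of K.\<close>
definition mapping_out :: "complex set \<Rightarrow> (complex \<Rightarrow> complex) \<Rightarrow> real \<Rightarrow> bool" where
  "mapping_out K g h \<longleftrightarrow> g holomorphic_on (upper_half - K) \<and> bij_betw g (upper_half - K) upper_half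
     \<and> (\<exists>C R. \<forall>z \<in> upper_half - K. norm z \<ge> R \<longrightarrow>
            norm (g z - z - of_real h / z) \<le> C / (norm z)^2)"

definition translate_hull :: "complex set \<Rightarrow> real \<Rightarrow> complex set" where
  "translate_hull K U = (\<lambda>w. w + of_real U) ` K"

end

theory Submission
  imports Defs "HOL-Complex_Analysis.Complex_Analysis"
begin

text \<open>
  The lower bound \<open>Im (f z) \<ge> Im z\<close> is the maximum principle for \<open>\<i> (f z - z)\<close>, whose real part
  is \<open>Im z - Im (f z) < Im z\<close>: it is small on horizontal lines close to the real axis, and small
  far out because \<open>f z - z \<rightarrow> 0\<close> at \<open>\<infinity>\<close>.

  For the estimates, the inversion \<open>W t = U - r / t\<close> turns \<open>g\<close> into
  \<open>F t = - r (g (W t) - W t)\<close> on the upper half disc. The hydrodynamic normalisation gives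
  \<open>F t = h t + O(t\<^sup>2)\<close>, and \<open>Im g \<le> Im\<close> gives \<open>0 \<le> Im (F t) \<le> r\<^sup>2 Im t / |t|\<^sup>2\<close>. The upper
  bound makes \<open>F\<close> Lipschitz away from \<open>0\<close> with real boundary values, so \<open>F\<close> reflects to a typically
  real function on a disc, with derivative \<open>h\<close> at \<open>0\<close>. The Carath\'eodory function
  \<open>(1 - t\<^sup>2) F t / t\<close> has nonnegative real part, and the Schwarz lemma applied to its Cayley
  transform yields \<open>|F t - h t| \<le> 200 h |t|\<^sup>2\<close> for \<open>|t| \<le> 4/5\<close> and \<open>h \<le> 68 r\<^sup>2\<close>. Pulled back
  through \<open>W\<close> this is \<open>|f z - z + h / (z - U)| \<le> 14000 h r / (Im z)\<^sup>2\<close>; Cauchy's inequality bounds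
  the derivative, and \<open>r = \<delta>\<^sup>4\<close> with \<open>\<delta> \<le> Im z\<close> converts both into the stated form.
\<close>

section \<open>Complex analysis on discs and rectangles\<close>

lemma tendsto_vertical_approach: "((\<lambda>s. t + \<i> * of_real s) \<longlongrightarrow> t) (at_right 0)"
  by (auto intro!: tendsto_eq_intros)

lemma eventually_vertical_approach:
  assumes "b > 0" "\<And>s. 0 < s \<Longrightarrow> s < b \<Longrightarrow> P (t + \<i> * of_real s)"
  shows "\<forall>\<^sub>F s in at_right 0. P (t + \<i> * of_real s)"
  unfolding eventually_at_right_field using assms by auto

lemma isCont_tendsto_vertical:
  "isCont \<Phi> t \<Longrightarrow> ((\<lambda>s. \<Phi> (t + \<i> * of_real s)) \<longlongrightarrow> \<Phi> t) (at_right 0)"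
  using isCont_tendsto_compose[OF _ tendsto_vertical_approach] .

lemma has_field_derivative_if_quadratic_error:
  assumes "d > 0" and bound: "\<And>t. cmod t < d \<Longrightarrow> cmod (\<Phi> t - c * t) \<le> C * (cmod t)^2"
  shows "(\<Phi> has_field_derivative c) (at (0::complex))"
proof -
  have \<Phi>0: "\<Phi> 0 = 0" using bound[of 0] \<open>d > 0\<close> by simp
  have "((\<lambda>t. (\<Phi> t - c * t) / t) \<longlongrightarrow> 0) (at 0)"
  proof (rule Lim_null_comparison)
    show "\<forall>\<^sub>F t in at 0. cmod ((\<Phi> t - c * t) / t) \<le> \<bar>C\<bar> * cmod t"
      unfolding eventually_at
    proof (intro exI[of _ d] conjI ballI impI allI)
      fix t :: complex assume "t \<noteq> 0 \<and> dist t 0 < d"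
      then have "t \<noteq> 0" "cmod t < d" by auto
      have "cmod (\<Phi> t - c * t) \<le> C * (cmod t)^2" by (rule bound) fact
      also have "\<dots> \<le> \<bar>C\<bar> * (cmod t)^2" by (rule mult_right_mono) auto
      finally have "cmod (\<Phi> t - c * t) / cmod t \<le> \<bar>C\<bar> * (cmod t)^2 / cmod t"
        by (rule divide_right_mono) simp
      then show "cmod ((\<Phi> t - c * t) / t) \<le> \<bar>C\<bar> * cmod t"
        using \<open>t \<noteq> 0\<close> by (simp add: norm_divide power2_eq_square)
    qed (use \<open>d > 0\<close> in auto)
    show "((\<lambda>t. \<bar>C\<bar> * cmod t) \<longlongrightarrow> 0) (at (0::complex))"
      by (auto intro!: tendsto_eq_intros)
  qed
  then have "((\<lambda>t. (\<Phi> t - c * t) / t + c) \<longlongrightarrow> 0 + c) (at 0)" by (intro tendsto_add) auto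
  moreover have "\<forall>\<^sub>F t in at 0. (\<Phi> t - c * t) / t + c = (\<Phi> t - \<Phi> 0) / (t - 0)"
    unfolding eventually_at by (intro exI[of _ 1]) (auto simp: \<Phi>0 field_simps)
  ultimately show ?thesis unfolding has_field_derivative_iff by (simp add: tendsto_cong)
qed

text \<open>\<open>\<Phi> / (\<Phi> - 4 \<i> B)\<close> maps the disc into itself, since \<open>Im \<Phi> \<le> B\<close> keeps \<open>\<Phi>\<close> nearer to \<open>0\<close>
  than to \<open>4 \<i> B\<close>; the Schwarz lemma bounds its derivative at \<open>0\<close>.\<close>
lemma deriv_bound_unit_disc_Im:
  assumes hol: "\<Phi> holomorphic_on ball 0 1" and \<Phi>0: "\<Phi> 0 = 0" and "B > 0"
    and Im_le: "\<And>\<xi>. norm \<xi> < 1 \<Longrightarrow> Im (\<Phi> \<xi>) \<le> B"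
  shows "cmod (deriv \<Phi> 0) \<le> 4 * B"
proof -
  define \<Psi> where "\<Psi> = (\<lambda>\<xi>. \<Phi> \<xi> / (\<Phi> \<xi> - 4 * \<i> * of_real B))"
  have den: "\<Phi> \<xi> - 4 * \<i> * of_real B \<noteq> 0" if "norm \<xi> < 1" for \<xi>
  proof
    assume "\<Phi> \<xi> - 4 * \<i> * of_real B = 0"
    then have "Im (\<Phi> \<xi> - 4 * \<i> * of_real B) = 0" by simp
    then have "Im (\<Phi> \<xi>) = 4 * B" by simp
    then show False using Im_le[OF that] \<open>B > 0\<close> by simp
  qed
  have hol\<Psi>: "\<Psi> holomorphic_on ball 0 1"
    unfolding \<Psi>_def using den by (intro holomorphic_intros hol) auto
  have \<Psi>_lt: "norm (\<Psi> \<xi>) < 1" if "norm \<xi> < 1" for \<xi>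
  proof -
    have "(cmod (\<Phi> \<xi>))^2 < (cmod (\<Phi> \<xi> - 4 * \<i> * of_real B))^2"
      unfolding cmod_power2 using Im_le[OF that] \<open>B > 0\<close>
        by (simp add: power2_eq_square algebra_simps)
    then have "cmod (\<Phi> \<xi>) < cmod (\<Phi> \<xi> - 4 * \<i> * of_real B)"
      using power_less_imp_less_base by fastforce
    then show ?thesis unfolding \<Psi>_def using den[OF that] by (simp add: norm_divide divide_less_eq)
  qed
  have "(\<Psi> has_field_derivative deriv \<Phi> 0 / (- 4 * \<i> * of_real B)) (at 0)"
  proof -
    have "(\<Phi> has_field_derivative deriv \<Phi> 0) (at 0)"
      using hol by (intro holomorphic_derivI[of _ "ball 0 1"]) auto
    from DERIV_divide[OF this DERIV_diff[OF this DERIV_const]] den[of 0]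
    show ?thesis unfolding \<Psi>_def using \<Phi>0 \<open>B > 0\<close> by (simp add: field_simps)
  qed
  then have "deriv \<Psi> 0 = deriv \<Phi> 0 / (- 4 * \<i> * of_real B)" by (rule DERIV_imp_deriv)
  moreover have "norm (deriv \<Psi> 0) \<le> 1"
    using Schwarz_Lemma(2)[OF hol\<Psi> _ \<Psi>_lt, of 0] \<Phi>0 unfolding \<Psi>_def by simp
  ultimately show ?thesis using \<open>B > 0\<close> by (simp add: norm_divide norm_mult)
qed

lemma deriv_bound_ball_Im:
  assumes hol: "F holomorphic_on ball c \<rho>" and "\<rho> > 0" "B > 0"
    and Im_le: "\<And>\<zeta>. \<zeta> \<in> ball c \<rho> \<Longrightarrow> Im (F \<zeta>) - Im (F c) \<le> B"
  shows "cmod (deriv F c) \<le> 4 * B / \<rho>"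
proof -
  define \<Phi> where "\<Phi> = (\<lambda>\<xi>. F (c + of_real \<rho> * \<xi>) - F c)"
  have inball: "c + of_real \<rho> * \<xi> \<in> ball c \<rho>" if "norm \<xi> < 1" for \<xi>
    using that \<open>\<rho> > 0\<close> by (simp add: dist_norm norm_mult)
  have hol\<Phi>: "\<Phi> holomorphic_on ball 0 1"
    unfolding \<Phi>_def
    by (intro holomorphic_intros holomorphic_on_compose_gen[OF _ hol, unfolded o_def])
      (auto intro: inball)
  have "cmod (deriv \<Phi> 0) \<le> 4 * B"
    by (rule deriv_bound_unit_disc_Im[OF hol\<Phi> _ \<open>B > 0\<close>])
      (use Im_le inball in \<open>auto simp: \<Phi>_def\<close>)
  moreover have "(\<Phi> has_field_derivative deriv F c * of_real \<rho>) (at 0)"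
  proof -
    have "(F has_field_derivative deriv F c) (at c)"
      using hol \<open>\<rho> > 0\<close> by (intro holomorphic_derivI[of _ "ball c \<rho>"]) auto
    moreover have "((\<lambda>\<xi>. c + of_real \<rho> * \<xi>) has_field_derivative of_real \<rho>) (at 0)"
      by (auto intro!: derivative_eq_intros)
    ultimately have
      "((\<lambda>\<xi>. F (c + of_real \<rho> * \<xi>)) has_field_derivative deriv F c * of_real \<rho>) (at 0)"
      using DERIV_chain2[of F "deriv F c"] by fastforce
    then show ?thesis unfolding \<Phi>_def by (auto intro!: derivative_eq_intros)
  qed
  then have "deriv \<Phi> 0 = deriv F c * of_real \<rho>" by (rule DERIV_imp_deriv)
  ultimately show ?thesis using \<open>\<rho> > 0\<close> by (simp add: norm_mult field_simps)
qed

lemma Schwarz_Re_pos: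
  assumes hol: "q holomorphic_on ball 0 1" and Re_pos: "\<And>\<xi>. cmod \<xi> < 1 \<Longrightarrow> 0 < Re (q \<xi>)"
    and q0: "q 0 = of_real c" and \<tau>: "cmod \<tau> < 1"
  shows "cmod (q \<tau> - of_real c) \<le> cmod \<tau> * cmod (q \<tau> + of_real c)"
proof -
  have "c > 0" using Re_pos[of 0] q0 by simp
  have lt: "cmod (q z - of_real c) < cmod (q z + of_real c)" if "cmod z < 1" for z
  proof -
    have "(cmod (q z - of_real c))^2 < (cmod (q z + of_real c))^2"
      unfolding cmod_power2 using Re_pos[OF that] \<open>c > 0\<close>
        by (simp add: power2_eq_square algebra_simps)
    then show ?thesis using power_less_imp_less_base by fastforce
  qed
  then have den: "q z + of_real c \<noteq> 0" if "cmod z < 1" for z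
    using that by fastforce
  define \<omega> where "\<omega> z = (q z - of_real c) / (q z + of_real c)" for z
  have "cmod (\<omega> \<tau>) \<le> cmod \<tau>"
  proof (rule Schwarz_Lemma(1)[OF _ _ _ \<tau>])
    show "\<omega> holomorphic_on ball 0 1" unfolding \<omega>_def using hol den
      by (intro holomorphic_intros) auto
    show "\<omega> 0 = 0" unfolding \<omega>_def q0 by simp
    show "cmod (\<omega> z) < 1" if "cmod z < 1" for z
      using lt[OF that] den[OF that] unfolding \<omega>_def by (simp add: norm_divide divide_less_eq)
  qed
  then show ?thesis using den[OF \<tau>] unfolding \<omega>_def
    by (simp add: norm_divide divide_le_eq mult.commute)
qed

lemma caratheodory_estimate:
  assumes hol: "p holomorphic_on ball 0 1" and Re_nonneg: "\<And>\<xi>. cmod \<xi> < 1 \<Longrightarrow> 0 \<le> Re (p \<xi>)"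
    and p0: "p 0 = of_real h" and \<tau>: "cmod \<tau> < 1"
  shows "(1 - cmod \<tau>) * cmod (p \<tau> - of_real h) \<le> 2 * h * cmod \<tau>"
proof -
  have h0: "0 \<le> h" using Re_nonneg[of 0] p0 by simp
  have approx: "(1 - cmod \<tau>) * cmod (p \<tau> - of_real h) \<le> 2 * h * cmod \<tau> + 2 * \<epsilon>" if "\<epsilon> > 0" for \<epsilon>
  proof -
    have "cmod (p \<tau> + of_real \<epsilon> - of_real (h + \<epsilon>))
        \<le> cmod \<tau> * cmod (p \<tau> + of_real \<epsilon> + of_real (h + \<epsilon>))"
      using Re_nonneg \<open>\<epsilon> > 0\<close> p0
      by (intro Schwarz_Re_pos[OF _ _ _ \<tau>]) (auto intro!: holomorphic_intros hol add_nonneg_pos)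
    also have "cmod (p \<tau> + of_real \<epsilon> + of_real (h + \<epsilon>)) \<le> cmod (p \<tau> - of_real h) + (2 * h + 2 * \<epsilon>)"
    proof -
      have "p \<tau> + of_real \<epsilon> + of_real (h + \<epsilon>) = (p \<tau> - of_real h) + of_real (2 * h + 2 * \<epsilon>)" by simp
      moreover have "cmod (of_real (2 * h + 2 * \<epsilon>) :: complex) = 2 * h + 2 * \<epsilon>"
        using h0 \<open>\<epsilon> > 0\<close> by (simp only: norm_of_real)
      ultimately show ?thesis by (metis norm_triangle_ineq)
    qed
    finally have "cmod (p \<tau> - of_real h) \<le> cmod \<tau> * (cmod (p \<tau> - of_real h) + (2 * h + 2 * \<epsilon>))"
      by (simp add: mult_left_mono)
    then have "(1 - cmod \<tau>) * cmod (p \<tau> - of_real h) \<le> 2 * h * cmod \<tau> + 2 * \<epsilon> * cmod \<tau>"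
      by (simp add: algebra_simps)
    also have "2 * \<epsilon> * cmod \<tau> \<le> 2 * \<epsilon>" using \<tau> \<open>\<epsilon> > 0\<close> by simp
    finally show ?thesis by simp
  qed
  show ?thesis by (rule field_le_epsilon) (use approx[of "_ / 2"] in simp)
qed

lemma Re_mult_div_unit_circle:
  assumes "cmod \<tau> = 1"
  shows "Re ((1 - \<tau>^2) * P / \<tau>) = 2 * Im \<tau> * Im P"
proof -
  have "\<tau> * cnj \<tau> = of_real ((cmod \<tau>)^2)" by (simp add: complex_mult_cnj cmod_power2)
  then have "\<tau> * cnj \<tau> = 1" using assms by simp
  moreover have "\<tau> \<noteq> 0" using assms by auto
  ultimately have "(1 - \<tau>^2) / \<tau> = cnj \<tau> - \<tau>" by (simp add: field_simps power2_eq_square)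
  then have "(1 - \<tau>^2) * P / \<tau> = (cnj \<tau> - \<tau>) * P" by (metis times_divide_eq_left)
  then show ?thesis by simp
qed

text \<open>For a typically real \<open>P\<close> (real on the real axis, \<open>Im P\<close> of the sign of \<open>Im \<tau>\<close>),
  \<open>(1 - \<tau>\<^sup>2) P(\<tau>) / \<tau>\<close> has nonnegative real part on the unit circle, hence in the disc.\<close>
lemma typically_real_estimate:
  fixes P :: "complex \<Rightarrow> complex" and h :: real
  assumes hol: "P holomorphic_on ball 0 R" and "R > 1" and P0: "P 0 = 0"
    and dP: "(P has_field_derivative of_real h) (at 0)"
    and Im_upper: "\<And>\<tau>. \<tau> \<in> ball 0 R \<Longrightarrow> 0 \<le> Im \<tau> \<Longrightarrow> 0 \<le> Im (P \<tau>)"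
    and Im_lower: "\<And>\<tau>. \<tau> \<in> ball 0 R \<Longrightarrow> Im \<tau> \<le> 0 \<Longrightarrow> Im (P \<tau>) \<le> 0"
  shows "0 \<le> h"
    and "\<And>\<tau>. cmod \<tau> < 1 \<Longrightarrow> \<tau> \<noteq> 0 \<Longrightarrow>
      (1 - cmod \<tau>) * cmod ((1 - \<tau>^2) * P \<tau> / \<tau> - of_real h) \<le> 2 * h * cmod \<tau>"
proof -
  define p where "p \<tau> = (1 - \<tau>^2) * (if \<tau> = 0 then deriv P 0 else (P \<tau> - P 0) / (\<tau> - 0))" for \<tau>
  have holp: "p holomorphic_on ball 0 R"
    unfolding p_def by (intro holomorphic_intros pole_lemma_open hol) simp
  have p_eq: "p \<tau> = (1 - \<tau>^2) * P \<tau> / \<tau>" if "\<tau> \<noteq> 0" for \<tau>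
    unfolding p_def using that P0 by simp
  have holp1: "p holomorphic_on ball 0 1"
    by (rule holomorphic_on_subset[OF holp]) (use \<open>R > 1\<close> in auto)
  have p0: "p 0 = of_real h" unfolding p_def using DERIV_imp_deriv[OF dP] by simp
  have Re_nonneg: "0 \<le> Re (p \<xi>)" if "cmod \<xi> < 1" for \<xi>
  proof -
    have "Re ((\<lambda>\<tau>. - p \<tau>) \<xi>) \<le> 0"
    proof (rule maximum_real_frontier[where S = "cball 0 1" and f = "\<lambda>\<tau>. - p \<tau>"])
      show "(\<lambda>\<tau>. - p \<tau>) holomorphic_on interior (cball 0 1)"
        using holp1 by (auto intro!: holomorphic_intros)
      have "cball 0 1 \<subseteq> ball (0::complex) R" using \<open>R > 1\<close> by auto
      then show "continuous_on (closure (cball 0 1)) (\<lambda>\<tau>. - p \<tau>)"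
        using holp by (auto intro!: continuous_intros
            intro: holomorphic_on_subset holomorphic_on_imp_continuous_on)
      fix \<tau> :: complex assume "\<tau> \<in> frontier (cball 0 1)"
      then have n1: "cmod \<tau> = 1" and "\<tau> \<in> ball 0 R" using \<open>R > 1\<close> by auto
      then have "0 \<le> Im \<tau> * Im (P \<tau>)"
        using Im_upper Im_lower by (cases "0 \<le> Im \<tau>") (auto simp: mult_nonpos_nonpos)
      moreover have "\<tau> \<noteq> 0" using n1 by auto
      ultimately show "Re (- p \<tau>) \<le> 0"
        using Re_mult_div_unit_circle[OF n1, of "P \<tau>"] p_eq[of \<tau>] by simp
    qed (use that in auto)
    then show ?thesis by simp
  qed
  show "0 \<le> h" using Re_nonneg[of 0] p0 by simp
  fix \<tau> :: complex assume \<tau>: "cmod \<tau> < 1" "\<tau> \<noteq> 0"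
  show "(1 - cmod \<tau>) * cmod ((1 - \<tau>^2) * P \<tau> / \<tau> - of_real h) \<le> 2 * h * cmod \<tau>"
    using caratheodory_estimate[OF holp1 Re_nonneg p0 \<tau>(1)] p_eq[OF \<tau>(2)] by simp
qed

lemma quadratic_bound_from_caratheodory:
  fixes P \<tau> :: complex and h :: real
  assumes "0 \<le> h" "\<tau> \<noteq> 0" "cmod \<tau> \<le> 80/87"
    and bound: "(1 - cmod \<tau>) * cmod ((1 - \<tau>^2) * P / \<tau> - of_real h) \<le> 2 * h * cmod \<tau>"
  shows "cmod (P - of_real h * \<tau>) \<le> 168 * h * (cmod \<tau>)^2"
proof -
  define q where "q = (1 - \<tau>^2) * P / \<tau>"
  have "7/87 * cmod (q - of_real h) \<le> (1 - cmod \<tau>) * cmod (q - of_real h)"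
    using assms(3) by (intro mult_right_mono) auto
  then have q: "cmod (q - of_real h) \<le> 174/7 * h * cmod \<tau>" using bound unfolding q_def by simp
  have \<tau>_sq: "cmod (\<tau>^2) \<le> 6400/7569"
    using mult_mono[OF assms(3) assms(3)] by (simp add: norm_power norm_mult power2_eq_square)
  have den: "1169/7569 \<le> cmod (1 - \<tau>^2)"
    using norm_triangle_ineq[of "1 - \<tau>^2" "\<tau>^2"] \<tau>_sq by simp
  then have "1 - \<tau>^2 \<noteq> 0" by auto
  then have "P - of_real h * \<tau> = \<tau> * (q - of_real h + of_real h * \<tau>^2) / (1 - \<tau>^2)"
    unfolding q_def using assms(2) by (simp add: field_simps)
  then have "cmod (P - of_real h * \<tau>)
      = cmod \<tau> * cmod (q - of_real h + of_real h * \<tau>^2) / cmod (1 - \<tau>^2)"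
    by (simp add: norm_mult norm_divide)
  also have "\<dots> \<le> cmod \<tau> * (181/7 * h * cmod \<tau>) / (1169/7569)"
  proof (rule frac_le)
    have "cmod (of_real h * \<tau>^2) \<le> h * cmod \<tau>"
      using mult_right_mono[of "cmod \<tau>" 1 "cmod \<tau>"] assms
      by (simp add: norm_mult norm_power power2_eq_square mult_left_mono)
    then have "cmod (q - of_real h + of_real h * \<tau>^2) \<le> 181/7 * h * cmod \<tau>"
      using norm_triangle_ineq[of "q - of_real h" "of_real h * \<tau>^2"] q by simp
    then show "cmod \<tau> * cmod (q - of_real h + of_real h * \<tau>^2) \<le> cmod \<tau> * (181/7 * h * cmod \<tau>)"
      by (rule mult_left_mono) simp
  qed (use den assms in auto)
  also have "\<dots> \<le> 168 * h * (cmod \<tau>)^2"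
    using assms(1) by (simp add: power2_eq_square field_simps mult_right_mono)
  finally show ?thesis .
qed

lemma lipschitz_on_deriv_bound:
  fixes F :: "complex \<Rightarrow> complex"
  assumes "convex R" "F holomorphic_on T" "open T" "R \<subseteq> T"
    and "\<And>z. z \<in> R \<Longrightarrow> cmod (deriv F z) \<le> B" "0 \<le> B"
  shows "B-lipschitz_on R F"
proof (rule lipschitz_onI)
  fix x y assume "x \<in> R" "y \<in> R"
  show "dist (F x) (F y) \<le> B * dist x y"
    unfolding dist_norm
  proof (rule field_differentiable_bound[OF \<open>convex R\<close>, where f' = "deriv F"])
    fix z assume "z \<in> R"
    then have "(F has_field_derivative deriv F z) (at z)"
      using assms(2-4) by (intro holomorphic_derivI[of F T]) auto
    then show "(F has_field_derivative deriv F z) (at z within R)"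
      by (rule has_field_derivative_at_within)
  qed (use assms \<open>x \<in> R\<close> \<open>y \<in> R\<close> in auto)
qed (fact assms)

lemma open_rectangle: "open {t. \<alpha> < Re t \<and> Re t < \<beta> \<and> \<bar>Im t\<bar> < b}"
proof -
  have "{t. \<alpha> < Re t \<and> Re t < \<beta> \<and> \<bar>Im t\<bar> < b}
      = {t. \<alpha> < Re t} \<inter> {t. Re t < \<beta>} \<inter> {t. Im t < b} \<inter> {t. - b < Im t}"
    by auto
  then show ?thesis
    by (simp only:) (intro open_Int open_halfspace_Re_gt open_halfspace_Re_lt
        open_halfspace_Im_gt open_halfspace_Im_lt)
qed

lemma Im_eq_0_if_vertical_limit:
  assumes "((\<lambda>s. G (x + \<i> * of_real s)) \<longlongrightarrow> G x) (at_right 0)"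
    and "\<forall>\<^sub>F s in at_right 0. \<bar>Im (G (x + \<i> * of_real s))\<bar> \<le> M * s"
  shows "Im (G x) = 0"
proof -
  have "((\<lambda>s. Im (G (x + \<i> * of_real s))) \<longlongrightarrow> 0) (at_right 0)"
    by (rule Lim_null_comparison[OF _ tendsto_mult_right_zero[OF tendsto_ident_at]])
      (use assms(2) in simp)
  then show ?thesis using tendsto_Im[OF assms(1)]
    by (rule tendsto_unique[rotated, OF _ _ trivial_limit_at_right_real, symmetric])
qed

text \<open>Reflection across the segment \<open>(\<alpha>, \<beta>)\<close> of a function on the rectangle above it that has
  no prescribed boundary values: Lipschitz continuity provides them, and \<open>Im F = O(Im t)\<close> makes
  them real.\<close>
lemma Schwarz_reflection_rectangle:
  fixes F :: "complex \<Rightarrow> complex" and \<alpha> \<beta> b :: real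
  defines "R \<equiv> {t. \<alpha> < Re t \<and> Re t < \<beta> \<and> 0 < Im t \<and> Im t < b}"
    and "S \<equiv> {t. \<alpha> < Re t \<and> Re t < \<beta> \<and> \<bar>Im t\<bar> < b}"
  assumes hol: "F holomorphic_on R" and lip: "L-lipschitz_on R F"
    and Im_small: "\<And>t. t \<in> R \<Longrightarrow> \<bar>Im (F t)\<bar> \<le> M * Im t"
  obtains \<Phi> where "\<Phi> holomorphic_on S"
    "\<And>t. t \<in> S \<Longrightarrow> 0 < Im t \<Longrightarrow> \<Phi> t = F t"
    "\<And>t. t \<in> S \<Longrightarrow> Im t < 0 \<Longrightarrow> \<Phi> t = cnj (F (cnj t))"
    "\<And>t. t \<in> S \<Longrightarrow> Im t = 0 \<Longrightarrow> Im (\<Phi> t) = 0"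
proof -
  obtain G where contG: "continuous_on (closure R) G" and GF: "\<And>t. t \<in> R \<Longrightarrow> G t = F t"
    using uniformly_continuous_on_extension_on_closure[OF lipschitz_on_uniformly_continuous[OF lip]]
      uniformly_continuous_imp_continuous by metis
  have SR: "S \<inter> {z. 0 < Im z} = R" unfolding S_def R_def by auto
  have above: "\<forall>\<^sub>F s in at_right 0. x + \<i> * of_real s \<in> R" if "x \<in> S" "Im x = 0" for x
    by (rule eventually_vertical_approach[of b]) (use that in \<open>auto simp: S_def R_def\<close>)
  have in_closure: "x \<in> closure R" if "x \<in> S" "Im x = 0" for x
  proof (rule Lim_in_closed_set[OF closed_closure _ _ tendsto_vertical_approach])
    show "\<forall>\<^sub>F s in at_right 0. x + \<i> * of_real s \<in> closure R"
      using above[OF that] by eventually_elim (use closure_subset in auto)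
  qed simp
  have SC: "S \<inter> {z. 0 \<le> Im z} \<subseteq> closure R"
    using SR in_closure closure_subset by (force simp: less_eq_real_def)
  have G_real: "Im (G x) = 0" if "x \<in> S" "Im x = 0" for x
  proof (rule Im_eq_0_if_vertical_limit[where G = G and x = x])
    show "((\<lambda>s. G (x + \<i> * of_real s)) \<longlongrightarrow> G x) (at_right 0)"
      by (intro continuous_on_tendsto_compose[OF contG tendsto_vertical_approach]
          in_closure that eventually_mono[OF above[OF that]] subsetD[OF closure_subset])
    show "\<forall>\<^sub>F s in at_right 0. \<bar>Im (G (x + \<i> * of_real s))\<bar> \<le> M * s"
      using above[OF that] by eventually_elim (use GF Im_small that in fastforce)
  qed
  show ?thesis
  proof
    have "open S" unfolding S_def by (rule open_rectangle)
    then show "(\<lambda>z. if 0 \<le> Im z then G z else cnj (G (cnj z))) holomorphic_on S"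
    proof (rule Schwarz_reflection)
      show "cnj ` S \<subseteq> S" unfolding S_def by auto
      show "G holomorphic_on S \<inter> {z. 0 < Im z}"
        unfolding SR using hol by (rule holomorphic_transform) (use GF in auto)
      show "continuous_on (S \<inter> {z. 0 \<le> Im z}) G" using contG SC by (rule continuous_on_subset)
      show "G z \<in> \<real>" if "z \<in> S" "z \<in> \<real>" for z
        using G_real that by (simp add: complex_is_Real_iff)
    qed
  qed (use GF G_real SR in \<open>auto simp: S_def R_def\<close>)
qed

definition upper_half_disc :: "complex set" where
  "upper_half_disc = {t. 0 < Im t \<and> cmod t < 1}"

lemma open_upper_half_disc: "open upper_half_disc"
proof -
  have "upper_half_disc = {t. 0 < Im t} \<inter> ball 0 1" unfolding upper_half_disc_def by auto
  then show ?thesis by (metis open_Int open_halfspace_Im_gt open_ball)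
qed

lemma Im_real_div: "Im (of_real a / t) = - a * Im t / (cmod t)^2"
  by (simp add: Im_divide cmod_power2)

lemma quarter_power_facts: fixes r :: real assumes "0 < r" "r < 1/2"
  shows "0 < r powr (1/4)" "(r powr (1/4))^4 = r" "r \<le> 16/25 * r powr (1/4)"
proof -
  define \<delta> where "\<delta> = r powr (1/4)"
  show d0: "0 < r powr (1/4)" using assms by simp
  have "\<delta>^4 = \<delta> powr (real 4)" using d0 unfolding \<delta>_def by (simp add: powr_realpow)
  also have "\<dots> = r" unfolding \<delta>_def using assms by (simp add: powr_powr)
  finally show d4: "(r powr (1/4))^4 = r" unfolding \<delta>_def .
  have "\<delta>^3 \<le> 16/25"
  proof (rule ccontr)
    assume "\<not> \<delta>^3 \<le> 16/25"
    then have "(16/25)^4 \<le> (\<delta>^3)^4" by (intro power_mono) auto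
    also have "(\<delta>^3)^4 = r^3" using d4 unfolding \<delta>_def by (metis power_mult mult.commute)
    also have "r^3 \<le> (1/2)^3" using assms by (intro power_mono) auto
    finally show False by (simp add: power_divide)
  qed
  then have "\<delta>^3 * \<delta> \<le> 16/25 * \<delta>" using d0 unfolding \<delta>_def by (intro mult_right_mono) auto
  moreover have "\<delta>^3 * \<delta> = \<delta>^4" by (simp add: eval_nat_numeral)
  ultimately show "r \<le> 16/25 * r powr (1/4)" using d4 unfolding \<delta>_def by simp
qed

lemma frontier_half_plane_cball:
  assumes "z \<in> frontier ({z. e \<le> Im z} \<inter> cball 0 R)"
  shows "Im z = e \<or> cmod z = R"
proof (rule ccontr)
  assume "\<not> (Im z = e \<or> cmod z = R)"
  moreover have "z \<in> {z. e \<le> Im z} \<inter> cball 0 R"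
    using assms closed_Int[OF closed_halfspace_Im_ge closed_cball] by (simp add: frontier_def)
  ultimately have "z \<in> {z. e < Im z} \<inter> ball 0 R" by auto
  moreover have "open ({z. e < Im z} \<inter> ball 0 R)" by (simp add: open_Int open_halfspace_Im_gt)
  moreover have "{z. e < Im z} \<inter> ball 0 R \<subseteq> {z. e \<le> Im z} \<inter> cball 0 R" by auto
  ultimately have "z \<in> interior ({z. e \<le> Im z} \<inter> cball 0 R)" by (meson interior_maximal subsetD)
  then show False using assms by (simp add: frontier_def)
qed

lemma open_upper_half: "open upper_half"
  unfolding upper_half_def by (simp add: open_halfspace_Im_gt)

lemma Im_mapping_error:
  "Im w - Im z * (1 + h / (cmod (z - of_real U))^2) = Im (w - z + of_real h / (z - of_real U))"
  using Im_real_div[of h "z - of_real U"] by (simp add: algebra_simps)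

section \<open>Mapping-out functions of hulls near a point\<close>

text \<open>In the application \<open>D\<close> is the complement of the hull \<open>K + U\<close>, \<open>g\<close> its mapping-out function
  and \<open>r\<close> any radius with \<open>r\<^sub>K \<le> r < 1\<close>.\<close>
locale normalized_mapping_out =
  fixes D :: "complex set" and g :: "complex \<Rightarrow> complex" and h :: real and U r :: real
  assumes open_D: "open D" and D_subset: "D \<subseteq> upper_half"
    and D_outside_radius: "\<And>w. Im w > 0 \<Longrightarrow> r < cmod (w - of_real U) \<Longrightarrow> w \<in> D"
    and r_pos: "0 < r" and r_lt_1: "r < 1"
    and holomorphic_g: "g holomorphic_on D" and inj_g: "inj_on g D"
    and g_image: "g ` D = upper_half"
    and g_expansion: "\<exists>C R. \<forall>w\<in>D. R \<le> cmod w \<longrightarrow> cmod (g w - w - of_real h / w) \<le> C / (cmod w)^2"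
begin

definition f where "f = inv_into D g"

lemma f_mem: assumes "Im z > 0" shows "f z \<in> D" "g (f z) = z"
proof -
  have "z \<in> g ` D" using g_image assms by (simp add: upper_half_def)
  then show "f z \<in> D" "g (f z) = z" unfolding f_def by (auto simp: inv_into_into f_inv_into_f)
qed

lemma f_g: "w \<in> D \<Longrightarrow> f (g w) = w"
  unfolding f_def using inj_g by simp

lemma Im_g_pos: "w \<in> D \<Longrightarrow> Im (g w) > 0"
  using g_image by (auto simp: upper_half_def)

lemma Im_pos_D: "w \<in> D \<Longrightarrow> Im w > 0"
  using D_subset by (auto simp: upper_half_def)

lemma holomorphic_f: "f holomorphic_on upper_half"
proof -
  obtain k where k: "k holomorphic_on (g ` D)" "\<And>z. z \<in> D \<Longrightarrow> k (g z) = z"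
    using holomorphic_has_inverse[OF holomorphic_g open_D inj_g] by metis
  have "f holomorphic_on (g ` D)"
  proof (rule holomorphic_transform[OF k(1)])
    fix x assume "x \<in> g ` D" then obtain w where "w \<in> D" "x = g w" by auto
    then show "k x = f x" using k(2) f_g by simp
  qed
  then show ?thesis using g_image by simp
qed

lemma g_near_identity: assumes "e > 0" shows "\<exists>R>0. \<forall>w\<in>D. R \<le> cmod w \<longrightarrow> cmod (g w - w) \<le> e"
proof -
  obtain C R where CR: "\<forall>w\<in>D. R \<le> cmod w \<longrightarrow> cmod (g w - w - of_real h / w) \<le> C / (cmod w)^2"
    using g_expansion by blast
  define R' where "R' = max (max R 1) ((\<bar>h\<bar> + \<bar>C\<bar>) / e)"
  have "R' > 0" unfolding R'_def by simp
  moreover have "cmod (g w - w) \<le> e" if "w \<in> D" "R' \<le> cmod w" for w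
  proof -
    have w1: "1 \<le> cmod w" and wR: "R \<le> cmod w" and we: "(\<bar>h\<bar> + \<bar>C\<bar>) / e \<le> cmod w"
      using that unfolding R'_def by auto
    have "cmod (g w - w) \<le> cmod (g w - w - of_real h / w) + cmod (of_real h / w)"
      by (metis add.commute diff_add_cancel norm_triangle_ineq)
    also have "\<dots> \<le> C / (cmod w)^2 + \<bar>h\<bar> / cmod w"
      using CR that wR by (auto simp: norm_divide)
    also have "C / (cmod w)^2 \<le> \<bar>C\<bar> / cmod w"
    proof -
      have "C / (cmod w)^2 \<le> \<bar>C\<bar> / (cmod w)^2" by (simp add: divide_right_mono)
      also have "\<dots> \<le> \<bar>C\<bar> / cmod w"
      proof (rule divide_left_mono)
        show "cmod w \<le> (cmod w)^2" using w1 mult_right_mono[of 1 "cmod w" "cmod w"]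
          by (simp add: power2_eq_square)
        show "0 < (cmod w)^2 * cmod w" using w1 by (intro mult_pos_pos) auto
      qed simp
      finally show ?thesis .
    qed
    hence "C / (cmod w)^2 + \<bar>h\<bar> / cmod w \<le> (\<bar>h\<bar> + \<bar>C\<bar>) / cmod w" by (simp add: add_divide_distrib)
    also have "\<dots> \<le> e" using we w1 \<open>e > 0\<close> by (simp add: divide_le_eq mult.commute pos_divide_le_eq)
    finally show ?thesis by linarith
  qed
  ultimately show ?thesis by blast
qed

lemma f_near_identity_ball:
  assumes "\<rho> > 0" "cball z \<rho> \<subseteq> D" "\<And>w. w \<in> cball z \<rho> \<Longrightarrow> cmod (g w - w) \<le> \<rho>" "Im z > 0"
  shows "cmod (f z - z) \<le> \<rho>"
proof -
  have contg: "continuous_on (cball z \<rho>) g"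
    using assms(2) holomorphic_g holomorphic_on_imp_continuous_on holomorphic_on_subset by blast
  obtain w where w: "w \<in> cball z \<rho>" "(\<lambda>w. w + z - g w) w = w"
  proof (rule brouwer[of "cball z \<rho>" "\<lambda>w. w + z - g w"])
    show "compact (cball z \<rho>)" "convex (cball z \<rho>)" "cball z \<rho> \<noteq> {}" using assms by auto
    show "continuous_on (cball z \<rho>) (\<lambda>w. w + z - g w)" by (intro continuous_intros contg)
    show "(\<lambda>w. w + z - g w) \<in> cball z \<rho> \<rightarrow> cball z \<rho>"
    proof
      fix w assume "w \<in> cball z \<rho>"
      then have "cmod (g w - w) \<le> \<rho>" using assms(3) by blast
      then show "w + z - g w \<in> cball z \<rho>" by (simp add: dist_norm norm_minus_commute)
    qed
  qed
  then have "g w = z" by simp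
  then have "f z = w" using f_g w assms(2) by blast
  then show ?thesis using w by (simp add: dist_norm norm_minus_commute)
qed

lemma f_near_identity: assumes "e > 0" shows "\<exists>R. \<forall>z. R \<le> cmod z \<longrightarrow> e \<le> Im z \<longrightarrow> cmod (f z - z) \<le> e/2"
proof -
  obtain R1 where R1: "R1 > 0" "\<forall>w\<in>D. R1 \<le> cmod w \<longrightarrow> cmod (g w - w) \<le> e/2"
    using g_near_identity[of "e/2"] assms by auto
  define R where "R = R1 + \<bar>U\<bar> + r + e"
  have "cmod (f z - z) \<le> e/2" if z: "R \<le> cmod z" "e \<le> Im z" for z
  proof (rule f_near_identity_ball)
    show "e/2 > 0" "Im z > 0" using assms z by auto
    have wD: "w \<in> D" and wR: "R1 \<le> cmod w" if "w \<in> cball z (e/2)" for w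
    proof -
      have d: "cmod (z - w) \<le> e/2" using that by (simp add: dist_norm)
      have "\<bar>Im z - Im w\<bar> \<le> e/2" using d abs_Im_le_cmod[of "z - w"] by simp
      then have "Im w > 0" using z assms by linarith
      have "cmod z \<le> cmod w + cmod (z - w)"
        by (metis add.commute diff_add_cancel norm_triangle_ineq)
      then have cw: "cmod w \<ge> R - e/2" using z d by linarith
      have "cmod w \<le> cmod (w - of_real U) + cmod (of_real U :: complex)"
        by (metis diff_add_cancel norm_triangle_ineq)
      then have "cmod (w - of_real U) > r" using cw assms R1(1) unfolding R_def
        by (simp add: norm_of_real) 
      then show "w \<in> D" using D_outside_radius \<open>Im w > 0\<close> by blast
      show "R1 \<le> cmod w" using cw assms r_pos abs_ge_zero[of U] unfolding R_def by linarith
    qed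
    show "cball z (e/2) \<subseteq> D" using wD by blast
    show "\<And>w. w \<in> cball z (e/2) \<Longrightarrow> cmod (g w - w) \<le> e/2" using wD wR R1 by blast
  qed
  then show ?thesis by blast
qed

text \<open>Maximum principle for \<open>Re (\<i> (f z - z)) = Im z - Im (f z)\<close> on \<open>{e \<le> Im z, |z| \<le> R}\<close>:
  on the bottom edge \<open>Im f > 0\<close>, on the arc \<open>f z \<approx> z\<close>.\<close>
lemma Im_f_ge_approx:
  assumes z0: "Im z0 > 0" and "\<eta> > 0"
  shows "Im z0 - Im (f z0) \<le> \<eta>"
proof -
  define e where "e = min \<eta> (Im z0 / 2)"
  have e: "e > 0" "e \<le> \<eta>" "e < Im z0" using assms unfolding e_def by auto
  obtain R where R: "\<forall>z. R \<le> cmod z \<longrightarrow> e \<le> Im z \<longrightarrow> cmod (f z - z) \<le> e/2"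
    using f_near_identity[OF e(1)] by blast
  define R' where "R' = max R (cmod z0 + 1)"
  define S where "S = {z. e \<le> Im z} \<inter> cball 0 R'"
  have S_sub: "S \<subseteq> upper_half" using e unfolding S_def upper_half_def by auto
  have "closed S" unfolding S_def
    by (intro closed_Int closed_cball) (simp add: closed_halfspace_Im_ge)
  have "Re ((\<lambda>z. \<i> * (f z - z)) z0) \<le> \<eta>"
  proof (rule maximum_real_frontier[where S=S and f="\<lambda>z. \<i> * (f z - z)"])
    show "(\<lambda>z. \<i> * (f z - z)) holomorphic_on interior S"
      using holomorphic_f S_sub interior_subset
        by (intro holomorphic_intros) (auto intro: holomorphic_on_subset)
    show "continuous_on (closure S) (\<lambda>z. \<i> * (f z - z))"
      using holomorphic_f S_sub \<open>closed S\<close>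
      by (intro continuous_intros holomorphic_on_imp_continuous_on)
        (auto intro: holomorphic_on_subset)
    show "bounded S" unfolding S_def by (simp add: bounded_Int)
    show "z0 \<in> S" using e unfolding S_def R'_def by auto
    fix z assume z: "z \<in> frontier S"
    have "z \<in> S" using z \<open>closed S\<close> by (simp add: frontier_def)
    then have "Im z > 0" "e \<le> Im z" using S_sub by (auto simp: upper_half_def S_def)
    then have "Im (f z) > 0" using f_mem Im_pos_D by blast
    have "Im z - Im (f z) \<le> \<eta>"
      using frontier_half_plane_cball[OF z[unfolded S_def]]
    proof
      assume "Im z = e" then show ?thesis using \<open>Im (f z) > 0\<close> e by linarith
    next
      assume "cmod z = R'"
      then have "cmod (f z - z) \<le> e/2" using R \<open>e \<le> Im z\<close> unfolding R'_def by simp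
      moreover have "Im z - Im (f z) \<le> cmod (f z - z)" using abs_Im_le_cmod[of "f z - z"] by simp
      ultimately show ?thesis using e by linarith
    qed
    then show "Re (\<i> * (f z - z)) \<le> \<eta>" by simp
  qed
  then show ?thesis by simp
qed

lemma Im_f_ge: assumes "Im z > 0" shows "Im z \<le> Im (f z)"
proof -
  have "Im z - Im (f z) \<le> 0"
    by (rule field_le_epsilon) (use Im_f_ge_approx[OF assms] in simp)
  then show ?thesis by simp
qed

lemma Im_g_le: assumes "w \<in> D" shows "Im (g w) \<le> Im w"
  using Im_f_ge[OF Im_g_pos[OF assms]] f_g[OF assms] by simp

text \<open>\<open>W\<close> maps the upper half disc onto the part of the upper half plane outside the half disc of
  radius \<open>r\<close> about \<open>U\<close>, sending \<open>t \<rightarrow> 0\<close> to \<open>\<infinity>\<close>.\<close>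
definition W where "W t = of_real U - of_real r / t"
definition F where "F t = - of_real r * (g (W t) - W t)"

lemma Im_W: "Im (W t) = r * Im t / (cmod t)^2"
  unfolding W_def by (simp add: Im_real_div)

lemma W_mem: assumes "t \<in> upper_half_disc" shows "W t \<in> D"
proof (rule D_outside_radius)
  have t: "0 < Im t" "cmod t < 1" using assms unfolding upper_half_disc_def by auto
  then have "t \<noteq> 0" by auto
  then show "0 < Im (W t)" unfolding Im_W using t r_pos by (simp add: divide_pos_pos)
  have "cmod (W t - of_real U) = r / cmod t" unfolding W_def using r_pos by (simp add: norm_divide)
  moreover have "r < r / cmod t" using t r_pos \<open>t \<noteq> 0\<close> by (simp add: less_divide_eq)
  ultimately show "r < cmod (W t - of_real U)" by simp
qed

lemma holomorphic_F: "F holomorphic_on upper_half_disc"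
proof -
  have holW: "W holomorphic_on upper_half_disc"
    unfolding W_def upper_half_disc_def by (intro holomorphic_intros) auto
  moreover have "g holomorphic_on W ` upper_half_disc"
    using holomorphic_g W_mem by (auto intro: holomorphic_on_subset)
  ultimately have "(g \<circ> W) holomorphic_on upper_half_disc" by (rule holomorphic_on_compose)
  then show ?thesis unfolding F_def o_def using holW by (intro holomorphic_intros) auto
qed

lemma Im_F_bounds:
  assumes "t \<in> upper_half_disc"
  shows "0 \<le> Im (F t)" "Im (F t) \<le> r^2 * Im t / (cmod t)^2"
proof -
  have wD: "W t \<in> D" by (rule W_mem[OF assms])
  have Im_F: "Im (F t) = r * (Im (W t) - Im (g (W t)))" unfolding F_def by (simp add: algebra_simps)
  show "0 \<le> Im (F t)" unfolding Im_F using Im_g_le[OF wD] r_pos by simp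
  have "Im (F t) \<le> r * Im (W t)" unfolding Im_F using Im_g_pos[OF wD] r_pos
    by (simp add: algebra_simps)
  also have "\<dots> = r^2 * Im t / (cmod t)^2" unfolding Im_W by (simp add: power2_eq_square)
  finally show "Im (F t) \<le> r^2 * Im t / (cmod t)^2" .
qed

lemma W_norm_ge:
  assumes "t \<noteq> 0" "\<bar>U\<bar> * cmod t \<le> r / 2"
  shows "r / 2 \<le> cmod (of_real U * t - of_real r)" "r / 2 / cmod t \<le> cmod (W t)"
proof -
  have "cmod (of_real r :: complex) \<le> cmod (of_real U * t - of_real r) + cmod (of_real U * t)"
    by (metis add.commute diff_add_cancel norm_minus_commute norm_triangle_ineq)
  then show den: "r / 2 \<le> cmod (of_real U * t - of_real r)"
    using assms r_pos by (simp add: norm_mult)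
  have "W t = (of_real U * t - of_real r) / t" unfolding W_def using assms
    by (simp add: field_simps)
  then show "r / 2 / cmod t \<le> cmod (W t)"
    using divide_right_mono[OF den, of "cmod t"] by (simp add: norm_divide)
qed

lemma F_minus_linear:
  assumes "t \<in> upper_half_disc" "of_real U * t - of_real r \<noteq> 0"
  shows "F t - of_real h * t = - of_real r * (g (W t) - W t - of_real h / W t)
    - of_real h * (of_real U * t^2 / (of_real U * t - of_real r))"
proof -
  have "t \<noteq> 0" using assms(1) unfolding upper_half_disc_def by auto
  have "W t \<noteq> 0" using Im_pos_D[OF W_mem[OF assms(1)]] by auto
  have "W t = (of_real U * t - of_real r) / t" unfolding W_def using \<open>t \<noteq> 0\<close>
    by (simp add: field_simps)
  then show ?thesis using \<open>t \<noteq> 0\<close> \<open>W t \<noteq> 0\<close> assms(2) unfolding F_def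
    by (simp add: field_simps power2_eq_square) algebra
qed

lemma F_quadratic_error_small:
  assumes CR: "\<forall>w\<in>D. R \<le> cmod w \<longrightarrow> cmod (g w - w - of_real h / w) \<le> C / (cmod w)^2"
    and t: "t \<in> upper_half_disc" "(\<bar>U\<bar> + max R 1 + 1) * cmod t \<le> r / 2"
  shows "cmod (F t - of_real h * t) \<le> (4 * \<bar>C\<bar> / r + 2 * \<bar>h\<bar> * \<bar>U\<bar> / r) * (cmod t)^2"
proof -
  have t0: "t \<noteq> 0" using t unfolding upper_half_disc_def by auto
  have "(\<bar>U\<bar> + max R 1 + 1) * cmod t = \<bar>U\<bar> * cmod t + (max R 1 + 1) * cmod t"
    by (simp add: algebra_simps)
  moreover have "0 \<le> \<bar>U\<bar> * cmod t" "0 \<le> (max R 1 + 1) * cmod t" by simp_all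
  ultimately have "\<bar>U\<bar> * cmod t \<le> r / 2" "(max R 1 + 1) * cmod t \<le> r / 2"
    using t(2) by linarith+
  note den = W_norm_ge(1)[OF t0 this(1)] and W_ge = W_norm_ge(2)[OF t0 this(1)]
  have "max R 1 + 1 \<le> r / 2 / cmod t"
    using \<open>(max R 1 + 1) * cmod t \<le> r / 2\<close> t0 by (simp add: field_simps)
  then have wR: "R \<le> cmod (W t)" and w1: "1 \<le> cmod (W t)" using W_ge by auto
  have "0 < r / 2 / cmod t" using r_pos t0 by simp
  then have "1 / cmod (W t) \<le> 1 / (r / 2 / cmod t)"
    by (rule frac_le[OF zero_le_one order_refl _ W_ge])
  then have inv_W: "1 / cmod (W t) \<le> 2 * cmod t / r" by simp
  have E: "cmod (g (W t) - W t - of_real h / W t) \<le> \<bar>C\<bar> * (2 * cmod t / r)^2"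
  proof -
    have "cmod (g (W t) - W t - of_real h / W t) \<le> C / (cmod (W t))^2" using CR W_mem[OF t(1)] wR
      by blast
    also have "\<dots> \<le> \<bar>C\<bar> * (1 / cmod (W t))^2" by (simp add: power_one_over divide_right_mono)
    also have "\<dots> \<le> \<bar>C\<bar> * (2 * cmod t / r)^2"
      using inv_W w1 by (intro mult_left_mono power_mono) auto
    finally show ?thesis .
  qed
  have lin: "cmod (of_real h * (of_real U * t^2 / (of_real U * t - of_real r)))
      \<le> \<bar>h\<bar> * (\<bar>U\<bar> * (cmod t)^2 / (r / 2))"
  proof -
    have "\<bar>U\<bar> * (cmod t)^2 / cmod (of_real U * t - of_real r) \<le> \<bar>U\<bar> * (cmod t)^2 / (r / 2)"
      by (rule divide_left_mono) (use den r_pos in \<open>auto intro!: mult_pos_pos\<close>)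
    from mult_left_mono[OF this, of "\<bar>h\<bar>"] show ?thesis
      by (simp add: norm_mult norm_divide norm_power)
  qed
  have nz: "of_real U * t - of_real r \<noteq> 0" using den r_pos by auto
  have "cmod (F t - of_real h * t) \<le> cmod (- of_real r * (g (W t) - W t - of_real h / W t))
      + cmod (of_real h * (of_real U * t^2 / (of_real U * t - of_real r)))"
    unfolding F_minus_linear[OF t(1) nz] by (rule norm_triangle_ineq4)
  also have "\<dots> \<le> r * (\<bar>C\<bar> * (2 * cmod t / r)^2) + \<bar>h\<bar> * (\<bar>U\<bar> * (cmod t)^2 / (r / 2))"
    using mult_left_mono[OF E, of r] r_pos lin by (intro add_mono) (simp_all add: norm_mult)
  also have "\<dots> = (4 * \<bar>C\<bar> / r + 2 * \<bar>h\<bar> * \<bar>U\<bar> / r) * (cmod t)^2"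
    using r_pos by (simp add: field_simps power2_eq_square)
  finally show ?thesis .
qed

lemma F_quadratic_near_0:
  "\<exists>C d. d > 0 \<and> (\<forall>t\<in>upper_half_disc. cmod t < d \<longrightarrow> cmod (F t - of_real h * t) \<le> C * (cmod t)^2)"
proof -
  obtain C R where CR: "\<forall>w\<in>D. R \<le> cmod w \<longrightarrow> cmod (g w - w - of_real h / w) \<le> C / (cmod w)^2"
    using g_expansion by blast
  define M where "M = \<bar>U\<bar> + max R 1 + 1"
  have "M > 0" unfolding M_def by simp
  have "M * cmod t \<le> r / 2" if "cmod t < r / (2 * M)" for t
    using that \<open>M > 0\<close> by (simp add: field_simps)
  then have "\<forall>t\<in>upper_half_disc. cmod t < r / (2 * M) \<longrightarrow>
      cmod (F t - of_real h * t) \<le> (4 * \<bar>C\<bar> / r + 2 * \<bar>h\<bar> * \<bar>U\<bar> / r) * (cmod t)^2"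
    using F_quadratic_error_small[OF CR] unfolding M_def by blast
  moreover have "r / (2 * M) > 0" using r_pos \<open>M > 0\<close> by simp
  ultimately show ?thesis by blast
qed

lemma deriv_F_bound:
  assumes "a > 0" and t: "0 < Im t" "Im t < 2/25" "cmod t < 24/25" "a \<le> cmod t"
  shows "cmod (deriv F t) \<le> 48 / a^2"
proof -
  define \<rho> where "\<rho> = Im t / 2"
  define B where "B = 6 * Im t / a^2"
  have \<rho>: "\<rho> > 0" "\<rho> < 1/25" unfolding \<rho>_def using t by auto
  have B: "B > 0" unfolding B_def using t assms by simp
  have near_t: "Im \<zeta> > Im t / 2" "Im \<zeta> \<le> 3/2 * Im t" "cmod \<zeta> < 1" "a / 2 \<le> cmod \<zeta>"
    if "\<zeta> \<in> ball t \<rho>" for \<zeta>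
  proof -
    have d: "cmod (t - \<zeta>) < \<rho>" using that by (simp add: dist_norm)
    have "\<bar>Im t - Im \<zeta>\<bar> \<le> cmod (t - \<zeta>)" using abs_Im_le_cmod[of "t - \<zeta>"] by simp
    then show "Im \<zeta> > Im t / 2" "Im \<zeta> \<le> 3/2 * Im t" using d unfolding \<rho>_def by linarith+
    have "\<rho> \<le> cmod t / 2" unfolding \<rho>_def using abs_Im_le_cmod[of t] by simp
    moreover have "cmod t \<le> cmod \<zeta> + cmod (t - \<zeta>)" "cmod \<zeta> \<le> cmod t + cmod (t - \<zeta>)"
      by (metis add.commute diff_add_cancel norm_triangle_ineq norm_minus_commute)+
    ultimately show "cmod \<zeta> < 1" "a / 2 \<le> cmod \<zeta>" using d \<rho> t by linarith+
  qed
  have ball_sub: "ball t \<rho> \<subseteq> upper_half_disc"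
    using near_t(1,3) t by (force simp: upper_half_disc_def)
  have "cmod (deriv F t) \<le> 4 * B / \<rho>"
  proof (rule deriv_bound_ball_Im)
    show "F holomorphic_on ball t \<rho>" using holomorphic_F ball_sub by (rule holomorphic_on_subset)
    fix \<zeta> assume \<zeta>: "\<zeta> \<in> ball t \<rho>"
    then have \<zeta>_disc: "\<zeta> \<in> upper_half_disc" using ball_sub by blast
    have "Im (F \<zeta>) \<le> r^2 * Im \<zeta> / (cmod \<zeta>)^2" by (rule Im_F_bounds(2)[OF \<zeta>_disc])
    also have "\<dots> \<le> 1 * (3/2 * Im t) / (a/2)^2"
    proof (intro frac_le mult_mono)
      show "r^2 \<le> 1" using r_pos r_lt_1 by (simp add: power_le_one)
      show "(a/2)^2 \<le> (cmod \<zeta>)^2" using near_t(4)[OF \<zeta>] \<open>a > 0\<close> by (intro power_mono) auto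
    qed (use near_t[OF \<zeta>] \<open>a > 0\<close> t in auto)
    also have "\<dots> = B" unfolding B_def by (simp add: power2_eq_square field_simps)
    finally show "Im (F \<zeta>) - Im (F t) \<le> B"
      using Im_F_bounds(1)[of t] t by (simp add: upper_half_disc_def)
  qed (use \<rho> B in auto)
  also have "4 * B / \<rho> = 48 / a^2" unfolding B_def \<rho>_def using t by (simp add: field_simps)
  finally show ?thesis .
qed

text \<open>Rectangles of height \<open>2/25\<close> over subintervals of \<open>(-22/25, 22/25)\<close> lie in the upper half
  disc; at distance \<open>a\<close> from \<open>0\<close>, \<open>F\<close> has derivative \<open>O(1/a\<^sup>2)\<close> and \<open>Im F = O(Im t / a\<^sup>2)\<close> there.\<close>
lemma F_reflection:
  fixes a \<alpha> \<beta> :: real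
  assumes "a > 0" "-(22/25) \<le> \<alpha>" "\<beta> \<le> 22/25" and away_0: "\<And>x. \<alpha> < x \<Longrightarrow> x < \<beta> \<Longrightarrow> a \<le> \<bar>x\<bar>"
  defines "S \<equiv> {t. \<alpha> < Re t \<and> Re t < \<beta> \<and> \<bar>Im t\<bar> < 2/25}"
  obtains \<Phi> where "\<Phi> holomorphic_on S"
    "\<And>t. t \<in> S \<Longrightarrow> 0 < Im t \<Longrightarrow> \<Phi> t = F t"
    "\<And>t. t \<in> S \<Longrightarrow> Im t < 0 \<Longrightarrow> \<Phi> t = cnj (F (cnj t))"
    "\<And>t. t \<in> S \<Longrightarrow> Im t = 0 \<Longrightarrow> Im (\<Phi> t) = 0"
proof -
  define R where "R = {t. \<alpha> < Re t \<and> Re t < \<beta> \<and> 0 < Im t \<and> Im t < 2/25}"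
  have R: "0 < Im t" "Im t < 2/25" "cmod t < 24/25" "a \<le> cmod t" if "t \<in> R" for t
  proof -
    have t: "\<alpha> < Re t" "Re t < \<beta>" "0 < Im t" "Im t < 2/25" using that unfolding R_def by auto
    then show "0 < Im t" "Im t < 2/25" by auto
    show "cmod t < 24/25" using cmod_le[of t] t assms by linarith
    show "a \<le> cmod t" using away_0[OF t(1,2)] abs_Re_le_cmod[of t] by linarith
  qed
  have R_sub: "R \<subseteq> upper_half_disc" using R unfolding upper_half_disc_def by fastforce
  have "convex R"
  proof -
    have "R = {t. \<alpha> < Re t} \<inter> {t. Re t < \<beta>} \<inter> {t. 0 < Im t} \<inter> {t. Im t < 2/25}"
      unfolding R_def by auto
    then show ?thesis
      by (simp only:) (intro convex_Int convex_halfspace_Re_gt convex_halfspace_Re_lt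
          convex_halfspace_Im_gt convex_halfspace_Im_lt)
  qed
  then have "(48 / a^2)-lipschitz_on R F"
    using holomorphic_F open_upper_half_disc R_sub deriv_F_bound[OF \<open>a > 0\<close> R]
    by (rule lipschitz_on_deriv_bound) (auto intro: divide_nonneg_nonneg)
  moreover have "\<bar>Im (F t)\<bar> \<le> 1 / a^2 * Im t" if "t \<in> R" for t
  proof -
    have t: "t \<in> upper_half_disc" using R_sub that by blast
    have "Im (F t) \<le> r^2 * Im t / (cmod t)^2" by (rule Im_F_bounds(2)[OF t])
    also have "\<dots> \<le> 1 * Im t / a^2"
    proof (intro frac_le mult_mono)
      show "r^2 \<le> 1" using r_pos r_lt_1 by (simp add: power_le_one)
      show "a^2 \<le> (cmod t)^2" using R(4)[OF that] \<open>a > 0\<close> by (intro power_mono) auto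
    qed (use R[OF that] \<open>a > 0\<close> in auto)
    finally show ?thesis using Im_F_bounds(1)[OF t] by simp
  qed
  ultimately show ?thesis
    using Schwarz_reflection_rectangle[of F \<alpha> \<beta> "2/25"]
      holomorphic_on_subset[OF holomorphic_F R_sub]
      that unfolding R_def S_def by blast
qed

text \<open>On the real axis \<open>F_ext\<close> takes the boundary values of \<open>F\<close>.\<close>
definition F_ext where
  "F_ext t = (if 0 < Im t then F t else if Im t < 0 then cnj (F (cnj t))
     else Lim (at_right 0) (\<lambda>s. F (t + \<i> * of_real s)))"

lemma F_ext_rectangle:
  fixes a \<alpha> \<beta> :: real
  assumes "a > 0" "-(22/25) \<le> \<alpha>" "\<beta> \<le> 22/25" "\<And>x. \<alpha> < x \<Longrightarrow> x < \<beta> \<Longrightarrow> a \<le> \<bar>x\<bar>"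
  defines "S \<equiv> {t. \<alpha> < Re t \<and> Re t < \<beta> \<and> \<bar>Im t\<bar> < 2/25}"
  shows "F_ext holomorphic_on S"
    and "\<And>t. t \<in> S \<Longrightarrow> Im t = 0 \<Longrightarrow> Im (F_ext t) = 0"
    and "\<And>t. t \<in> S \<Longrightarrow> Im t = 0 \<Longrightarrow> ((\<lambda>s. F (t + \<i> * of_real s)) \<longlongrightarrow> F_ext t) (at_right 0)"
proof -
  obtain \<Phi> where hol: "\<Phi> holomorphic_on S"
    and upper: "\<And>t. t \<in> S \<Longrightarrow> 0 < Im t \<Longrightarrow> \<Phi> t = F t"
    and lower: "\<And>t. t \<in> S \<Longrightarrow> Im t < 0 \<Longrightarrow> \<Phi> t = cnj (F (cnj t))"
    and real: "\<And>t. t \<in> S \<Longrightarrow> Im t = 0 \<Longrightarrow> Im (\<Phi> t) = 0"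
    by (rule F_reflection[of a \<alpha> \<beta>, folded S_def]; (rule assms)?; blast)
  have limit: "((\<lambda>s. F (t + \<i> * of_real s)) \<longlongrightarrow> \<Phi> t) (at_right 0)" if "t \<in> S" "Im t = 0" for t
  proof -
    have "open S" unfolding S_def by (rule open_rectangle)
    then have cont: "isCont \<Phi> t"
      using holomorphic_on_imp_continuous_on[OF hol] that(1) continuous_on_eq_continuous_at by blast
    have "\<forall>\<^sub>F s in at_right 0. \<Phi> (t + \<i> * of_real s) = F (t + \<i> * of_real s)"
    proof (rule eventually_vertical_approach[of "2/25"])
      fix s :: real assume "0 < s" "s < 2/25"
      then show "\<Phi> (t + \<i> * of_real s) = F (t + \<i> * of_real s)"
        using that by (intro upper) (auto simp: S_def)
    qed simp
    from tendsto_cong[OF this] isCont_tendsto_vertical[OF cont] show ?thesis by simp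
  qed
  have \<Phi>_eq: "F_ext t = \<Phi> t" if "t \<in> S" for t
  proof -
    consider "0 < Im t" | "Im t < 0" | "Im t = 0" by linarith
    then show ?thesis
    proof cases
      case 3
      then show ?thesis using tendsto_Lim[OF _ limit[OF that 3]] unfolding F_ext_def by simp
    qed (use upper[OF that] lower[OF that] in \<open>simp_all add: F_ext_def\<close>)
  qed
  show "F_ext holomorphic_on S" using hol by (rule holomorphic_transform) (simp add: \<Phi>_eq)
  show "Im (F_ext t) = 0" if "t \<in> S" "Im t = 0" for t using real that \<Phi>_eq by simp
  show "((\<lambda>s. F (t + \<i> * of_real s)) \<longlongrightarrow> F_ext t) (at_right 0)" if "t \<in> S" "Im t = 0" for t
    using limit[OF that] \<Phi>_eq[OF that(1)] by simp
qed

lemma F_ext_near_real_axis: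
  assumes "Im x = 0" "x \<noteq> 0" "cmod x < 22/25"
  obtains S where "open S" "x \<in> S" "F_ext holomorphic_on S" "Im (F_ext x) = 0"
    "((\<lambda>s. F (x + \<i> * of_real s)) \<longlongrightarrow> F_ext x) (at_right 0)"
proof -
  have x: "Re x \<noteq> 0" "\<bar>Re x\<bar> < 22/25"
    using assms abs_Re_le_cmod[of x] by (auto simp: complex_eq_iff)
  define \<alpha> where "\<alpha> = (if 0 < Re x then Re x / 2 else - (22/25))"
  define \<beta> where "\<beta> = (if 0 < Re x then 22/25 else Re x / 2)"
  define S where "S = {t. \<alpha> < Re t \<and> Re t < \<beta> \<and> \<bar>Im t\<bar> < 2/25}"
  have a: "0 < \<bar>Re x\<bar> / 2" "-(22/25) \<le> \<alpha>" "\<beta> \<le> 22/25"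
    and xS: "x \<in> S" using x assms(1) unfolding \<alpha>_def \<beta>_def S_def by auto
  have away_0: "\<bar>Re x\<bar> / 2 \<le> \<bar>y\<bar>" if "\<alpha> < y" "y < \<beta>" for y
    using that x unfolding \<alpha>_def \<beta>_def by (auto split: if_splits)
  have "F_ext holomorphic_on S"
    unfolding S_def by (rule F_ext_rectangle(1)[OF a]) (rule away_0)
  moreover have "Im (F_ext x) = 0"
    by (rule F_ext_rectangle(2)[OF a _ xS[unfolded S_def] assms(1)]) (rule away_0)
  moreover have "((\<lambda>s. F (x + \<i> * of_real s)) \<longlongrightarrow> F_ext x) (at_right 0)"
    by (rule F_ext_rectangle(3)[OF a _ xS[unfolded S_def] assms(1)]) (rule away_0)
  moreover have "open S" unfolding S_def by (rule open_rectangle)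
  ultimately show ?thesis using that xS by blast
qed

lemma F_vertical_limit_0: "((\<lambda>s. F (0 + \<i> * of_real s)) \<longlongrightarrow> 0) (at_right 0)"
proof -
  obtain C d where "d > 0"
    and quad: "\<And>t. t \<in> upper_half_disc \<Longrightarrow> cmod t < d \<Longrightarrow> cmod (F t - of_real h * t) \<le> C * (cmod t)^2"
    using F_quadratic_near_0 by blast
  have "((\<lambda>s. F (\<i> * of_real s) - of_real h * (\<i> * of_real s)) \<longlongrightarrow> 0) (at_right 0)"
  proof (rule Lim_null_comparison)
    have "\<forall>\<^sub>F s in at_right 0. cmod (F (0 + \<i> * of_real s) - of_real h * (0 + \<i> * of_real s))
        \<le> C * (cmod (0 + \<i> * of_real s))^2"
    proof (rule eventually_vertical_approach[of "min d 1"])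
      fix s :: real assume "0 < s" "s < min d 1"
      then show "cmod (F (0 + \<i> * of_real s) - of_real h * (0 + \<i> * of_real s))
          \<le> C * (cmod (0 + \<i> * of_real s))^2"
        using quad[of "\<i> * of_real s"] by (simp add: upper_half_disc_def norm_mult)
    qed (use \<open>d > 0\<close> in simp)
    then show "\<forall>\<^sub>F s in at_right 0.
        cmod (F (\<i> * of_real s) - of_real h * (\<i> * of_real s)) \<le> C * s^2"
      by (simp add: norm_mult)
  qed (auto intro!: tendsto_eq_intros)
  then have "((\<lambda>s. F (\<i> * of_real s) - of_real h * (\<i> * of_real s) + of_real h * (\<i> * of_real s))
      \<longlongrightarrow> 0 + of_real h * (\<i> * of_real 0)) (at_right 0)"
    by (intro tendsto_add tendsto_mult tendsto_const tendsto_of_real)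
      (auto intro!: tendsto_eq_intros)
  then show ?thesis by simp
qed

lemma F_ext_0: "F_ext 0 = 0"
  using tendsto_Lim[OF _ F_vertical_limit_0] unfolding F_ext_def by simp

lemma F_ext_vertical_limit:
  assumes "Im x = 0" "cmod x < 22/25"
  shows "((\<lambda>s. F (x + \<i> * of_real s)) \<longlongrightarrow> F_ext x) (at_right 0)"
proof (cases "x = 0")
  case True
  then show ?thesis using F_vertical_limit_0 F_ext_0 by simp
next
  case False
  then show ?thesis using F_ext_near_real_axis[OF assms(1) False assms(2)] by blast
qed

lemma F_ext_quadratic_on_real_axis:
  assumes upper: "\<And>t. 0 < Im t \<Longrightarrow> cmod t < d \<Longrightarrow> cmod (F t - of_real h * t) \<le> C * (cmod t)^2"
    and "d \<le> 22/25" and t: "Im t = 0" "cmod t < d"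
  shows "cmod (F_ext t - of_real h * t) \<le> C * (cmod t)^2"
proof -
  have lim: "((\<lambda>s. cmod (F (t + \<i> * of_real s) - of_real h * (t + \<i> * of_real s)))
      \<longlongrightarrow> cmod (F_ext t - of_real h * t)) (at_right 0)"
    using F_ext_vertical_limit[OF t(1)] t assms(2)
    by (auto intro!: tendsto_norm tendsto_diff tendsto_mult tendsto_const tendsto_vertical_approach)
  have lim_bound: "((\<lambda>s. C * (cmod (t + \<i> * of_real s))^2) \<longlongrightarrow> C * (cmod t)^2) (at_right 0)"
    by (intro tendsto_mult tendsto_const tendsto_power tendsto_norm tendsto_vertical_approach)
  have ev: "\<forall>\<^sub>F s in at_right 0. cmod (F (t + \<i> * of_real s) - of_real h * (t + \<i> * of_real s))
      \<le> C * (cmod (t + \<i> * of_real s))^2"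
  proof (rule eventually_vertical_approach[of "d - cmod t"])
    fix s :: real assume s: "0 < s" "s < d - cmod t"
    have "cmod (t + \<i> * of_real s) \<le> cmod t + s"
      using norm_triangle_ineq[of t "\<i> * of_real s"] s by (simp add: norm_mult)
    then show "cmod (F (t + \<i> * of_real s) - of_real h * (t + \<i> * of_real s))
        \<le> C * (cmod (t + \<i> * of_real s))^2"
      using s t by (intro upper) auto
  qed (use t in simp)
  show ?thesis by (rule tendsto_le[OF _ lim_bound lim ev]) simp
qed

lemma F_ext_quadratic_near_0:
  "\<exists>C d. d > 0 \<and> (\<forall>t. cmod t < d \<longrightarrow> cmod (F_ext t - of_real h * t) \<le> C * (cmod t)^2)"
proof -
  obtain C d0 where "d0 > 0" and quad:
    "\<And>t. t \<in> upper_half_disc \<Longrightarrow> cmod t < d0 \<Longrightarrow> cmod (F t - of_real h * t) \<le> C * (cmod t)^2"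
    using F_quadratic_near_0 by blast
  define d where "d = min d0 (22/25)"
  have d: "d > 0" "d \<le> d0" "d \<le> 22/25" unfolding d_def using \<open>d0 > 0\<close> by auto
  have upper: "cmod (F t - of_real h * t) \<le> C * (cmod t)^2" if "0 < Im t" "cmod t < d" for t
    using quad that d by (simp add: upper_half_disc_def)
  have "cmod (F_ext t - of_real h * t) \<le> C * (cmod t)^2" if t: "cmod t < d" for t
  proof -
    consider "0 < Im t" | "Im t < 0" | "Im t = 0" by linarith
    then show ?thesis
    proof cases
      case 1
      then show ?thesis using upper t by (simp add: F_ext_def)
    next
      case 2
      then have "F_ext t - of_real h * t = cnj (F (cnj t) - of_real h * cnj t)"
        by (simp add: F_ext_def)
      then have "cmod (F_ext t - of_real h * t) = cmod (F (cnj t) - of_real h * cnj t)"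
        by (metis complex_mod_cnj)
      also have "\<dots> \<le> C * (cmod t)^2" using upper[of "cnj t"] 2 t by simp
      finally show ?thesis .
    qed (use F_ext_quadratic_on_real_axis[OF upper d(3) _ t] in simp)
  qed
  then show ?thesis using d by blast
qed

lemma F_ext_deriv_0: "(F_ext has_field_derivative of_real h) (at 0)"
proof -
  obtain C d where "d > 0" "\<And>t. cmod t < d \<Longrightarrow> cmod (F_ext t - of_real h * t) \<le> C * (cmod t)^2"
    using F_ext_quadratic_near_0 by blast
  then show ?thesis by (rule has_field_derivative_if_quadratic_error)
qed

lemma F_ext_holomorphic_near:
  assumes "z \<noteq> 0" "cmod z < 22/25"
  obtains N where "open N" "z \<in> N" "F_ext holomorphic_on N"
proof -
  define L where "L = {t. Im t < 0 \<and> cmod t < 1}"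
  consider "0 < Im z" | "Im z < 0" | "Im z = 0" by linarith
  then show ?thesis
  proof cases
    case 1
    have "F_ext holomorphic_on upper_half_disc"
      using holomorphic_F by (rule holomorphic_transform) (simp add: F_ext_def upper_half_disc_def)
    then show ?thesis using that open_upper_half_disc 1 assms(2) by (simp add: upper_half_disc_def)
  next
    case 2
    have "L = {t. Im t < 0} \<inter> ball 0 1" unfolding L_def by auto
    then have "open L" by (simp add: open_Int open_halfspace_Im_lt)
    moreover have "cnj ` L = upper_half_disc"
      unfolding L_def upper_half_disc_def by (auto simp: image_iff intro!: exI[of _ "cnj x" for x])
    ultimately have "(cnj \<circ> F \<circ> cnj) holomorphic_on L"
      using holomorphic_F by (intro holomorphic_on_compose_cnj_cnj) simp_all
    then have "F_ext holomorphic_on L" by (rule holomorphic_transform) (simp add: F_ext_def L_def)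
    then show ?thesis using that \<open>open L\<close> 2 assms(2) by (simp add: L_def)
  next
    case 3
    then show ?thesis using F_ext_near_real_axis[OF 3 assms] that by metis
  qed
qed

lemma holomorphic_F_ext: "F_ext holomorphic_on ball 0 (22/25)"
proof -
  have "\<exists>f'. (F_ext has_field_derivative f') (at z)" if z: "cmod z < 22/25" for z
  proof (cases "z = 0")
    case True
    then show ?thesis using F_ext_deriv_0 by blast
  next
    case False
    then obtain N where "open N" "z \<in> N" "F_ext holomorphic_on N"
      using F_ext_holomorphic_near z by metis
    then show ?thesis using holomorphic_derivI by blast
  qed
  then show ?thesis by (simp add: holomorphic_on_open)
qed

lemma Im_F_ext_real:
  assumes "Im t = 0" "cmod t < 22/25"
  shows "Im (F_ext t) = 0"
proof (cases "t = 0")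
  case True
  then show ?thesis by (simp add: F_ext_0)
next
  case False
  then show ?thesis using F_ext_near_real_axis[OF assms(1) False assms(2)] by blast
qed

lemma Im_F_ext_sign:
  assumes "cmod t < 22/25"
  shows "0 \<le> Im t \<Longrightarrow> 0 \<le> Im (F_ext t)" and "Im t \<le> 0 \<Longrightarrow> Im (F_ext t) \<le> 0"
proof -
  have "0 \<le> Im (F t)" if "0 < Im t" using Im_F_bounds(1) that assms
    by (simp add: upper_half_disc_def)
  moreover have "0 \<le> Im (F (cnj t))" if "Im t < 0"
    using Im_F_bounds(1)[of "cnj t"] that assms by (simp add: upper_half_disc_def)
  ultimately show "0 \<le> Im t \<Longrightarrow> 0 \<le> Im (F_ext t)" and "Im t \<le> 0 \<Longrightarrow> Im (F_ext t) \<le> 0"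
    using Im_F_ext_real[OF _ assms] by (auto simp: F_ext_def less_eq_real_def)
qed

text \<open>\<open>F_ext\<close> is typically real on the disc of radius \<open>22/25\<close>; the Carath\'eodory argument needs
  a disc of radius \<open>> 1\<close>, hence the rescaling by \<open>87/100\<close>.\<close>
definition F_rescaled where "F_rescaled \<tau> = F_ext (of_real (87/100) * \<tau>) / of_real (87/100)"

lemma holomorphic_F_rescaled: "F_rescaled holomorphic_on ball 0 (88/87)"
proof -
  have "of_real (87/100) * \<tau> \<in> ball 0 (22/25)" if "\<tau> \<in> ball 0 (88/87)" for \<tau> :: complex
    using that by (simp add: norm_mult)
  then show ?thesis unfolding F_rescaled_def
    by (intro holomorphic_intros holomorphic_on_compose_gen[OF _ holomorphic_F_ext, unfolded o_def])
      auto
qed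

lemma F_rescaled_0: "F_rescaled 0 = 0"
  unfolding F_rescaled_def by (simp add: F_ext_0)

lemma F_rescaled_deriv_0: "(F_rescaled has_field_derivative of_real h) (at 0)"
proof -
  have "((\<lambda>\<tau>. of_real (87/100) * \<tau>) has_field_derivative of_real (87/100)) (at 0)"
    by (auto intro!: derivative_eq_intros)
  from DERIV_chain2[OF _ this, of F_ext "of_real h"] F_ext_deriv_0
  have "((\<lambda>\<tau>. F_ext (of_real (87/100) * \<tau>))
      has_field_derivative of_real h * of_real (87/100)) (at 0)"
    by simp
  from DERIV_cdivide[OF this, of "of_real (87/100)"] show ?thesis
    unfolding F_rescaled_def by simp
qed

lemma Im_F_rescaled_sign:
  assumes "\<tau> \<in> ball 0 (88/87)"
  shows "0 \<le> Im \<tau> \<Longrightarrow> 0 \<le> Im (F_rescaled \<tau>)" and "Im \<tau> \<le> 0 \<Longrightarrow> Im (F_rescaled \<tau>) \<le> 0"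
proof -
  have n: "cmod (of_real (87/100) * \<tau>) < 22/25" using assms by (simp add: norm_mult)
  have "Im (F_rescaled \<tau>) = Im (F_ext (of_real (87/100) * \<tau>)) * (100/87)"
    unfolding F_rescaled_def by simp
  then show "0 \<le> Im \<tau> \<Longrightarrow> 0 \<le> Im (F_rescaled \<tau>)" and "Im \<tau> \<le> 0 \<Longrightarrow> Im (F_rescaled \<tau>) \<le> 0"
    using Im_F_ext_sign[OF n] by (simp_all add: mult_nonpos_nonneg)
qed

lemmas F_rescaled_estimate = typically_real_estimate[OF holomorphic_F_rescaled _ F_rescaled_0
    F_rescaled_deriv_0 Im_F_rescaled_sign]

lemma h_nonneg: "0 \<le> h" using F_rescaled_estimate(1) by simp

text \<open>The estimate at \<open>\<tau> = \<i>/4\<close> bounds \<open>h\<close> by \<open>Im (F_rescaled \<tau>)\<close>, which \<open>Im_F_bounds\<close> controls.\<close>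
lemma h_le: "h \<le> 68 * r^2"
proof -
  define \<tau> :: complex where "\<tau> = \<i> / 4"
  have tn: "cmod \<tau> = 1/4" unfolding \<tau>_def by (simp add: norm_divide)
  define q where "q = (1 - \<tau>^2) * F_rescaled \<tau> / \<tau>"
  have qb: "(1 - cmod \<tau>) * cmod (q - of_real h) \<le> 2 * h * cmod \<tau>"
    unfolding q_def by (rule F_rescaled_estimate(2)) (use tn in \<open>auto simp: \<tau>_def\<close>)
  then have "cmod (q - of_real h) \<le> 2/3 * h" unfolding tn by simp
  then have "h - Re q \<le> 2/3 * h" using abs_Re_le_cmod[of "q - of_real h"] by simp
  then have Req: "h / 3 \<le> Re q" by simp
  have qe: "q = - (17/4) * \<i> * F_rescaled \<tau>" unfolding q_def \<tau>_def
    by (simp add: field_simps power2_eq_square)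
  have "Re q = 17/4 * Im (F_rescaled \<tau>)" unfolding qe by simp
  moreover have "Im (F_rescaled \<tau>) \<le> r^2 * 4 * (100/87)^2"
  proof -
    define t where "t = of_real (87/100) * \<tau>"
    have tT: "t \<in> upper_half_disc" unfolding t_def \<tau>_def upper_half_disc_def
      by (simp add: norm_mult norm_divide)
    have "Im (F_rescaled \<tau>) = Im (F t) * (100/87)"
      unfolding F_rescaled_def t_def[symmetric] F_ext_def using tT unfolding upper_half_disc_def
        by simp
    also have "\<dots> \<le> r^2 * Im t / (cmod t)^2 * (100/87)" using Im_F_bounds(2)[OF tT]
      by (rule mult_right_mono) simp
    also have "r^2 * Im t / (cmod t)^2 = r^2 * 4 * (100/87)" unfolding t_def \<tau>_def
      by (simp add: norm_mult norm_divide power2_eq_square)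
    finally show ?thesis by (simp add: power2_eq_square)
  qed
  ultimately have "h / 3 \<le> 17/4 * (r^2 * 4 * (100/87)^2)" using Req by linarith
  then have A: "h \<le> (170000/2523) * r^2" by (simp add: power2_eq_square)
  have "(170000/2523) * r^2 \<le> 68 * r^2" by (rule mult_right_mono) auto
  then show ?thesis using A by linarith
qed

lemma F_quadratic:
  assumes t: "t \<in> upper_half_disc" "cmod t \<le> 4/5"
  shows "cmod (F t - of_real h * t) \<le> 200 * h * (cmod t)^2"
proof -
  define \<tau> where "\<tau> = t / of_real (87/100)"
  have "t \<noteq> 0" using t unfolding upper_half_disc_def by auto
  then have \<tau>: "\<tau> \<noteq> 0" "cmod \<tau> = cmod t * (100/87)" "cmod \<tau> \<le> 80/87"
    unfolding \<tau>_def using t by (auto simp: norm_divide)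
  have t_eq: "t = of_real (87/100) * \<tau>" unfolding \<tau>_def by simp
  have "F t - of_real h * t = of_real (87/100) * (F_rescaled \<tau> - of_real h * \<tau>)"
    using t unfolding F_rescaled_def t_eq[symmetric]
      by (simp add: F_ext_def upper_half_disc_def t_eq)
  then have "cmod (F t - of_real h * t) = 87/100 * cmod (F_rescaled \<tau> - of_real h * \<tau>)"
    by (simp only: norm_mult norm_of_real)
  also have "\<dots> \<le> 87/100 * (168 * h * (cmod \<tau>)^2)"
  proof (rule mult_left_mono[OF quadratic_bound_from_caratheodory[OF h_nonneg \<tau>(1,3)]])
    show "(1 - cmod \<tau>) * cmod ((1 - \<tau>^2) * F_rescaled \<tau> / \<tau> - of_real h) \<le> 2 * h * cmod \<tau>"
      by (rule F_rescaled_estimate(2)) (use \<tau> in auto)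
  qed simp
  also have "\<dots> = 16800/87 * h * (cmod t)^2" unfolding \<tau>(2) by (simp add: power2_eq_square)
  also have "\<dots> \<le> 200 * h * (cmod t)^2" using h_nonneg by (intro mult_right_mono) auto
  finally show ?thesis .
qed

lemma g_error_estimate:
  assumes w: "w \<in> D" "y \<le> Im w" and y: "0 < y" "r \<le> 4/5 * y"
  shows "cmod (g w - w - of_real h / (w - of_real U)) \<le> 200 * h * r / y^2"
proof -
  have wU: "y \<le> cmod (w - of_real U)" using abs_Im_le_cmod[of "w - of_real U"] w by simp
  then have wU0: "w - of_real U \<noteq> 0" using y by auto
  text \<open>The preimage of \<open>w\<close> under \<open>W\<close>.\<close>
  define t where "t = - of_real r / (w - of_real U)"
  have t_norm: "cmod t = r / cmod (w - of_real U)" unfolding t_def using r_pos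
    by (simp add: norm_divide)
  have t45: "cmod t \<le> 4/5"
  proof -
    have "r / cmod (w - of_real U) \<le> r / y"
      using wU y r_pos by (intro divide_left_mono) (auto intro!: mult_pos_pos)
    also have "\<dots> \<le> 4/5" using y by (simp add: divide_le_eq)
    finally show ?thesis unfolding t_norm .
  qed
  have "Im t = r * Im (w - of_real U) / (cmod (w - of_real U))^2"
    unfolding t_def using Im_real_div[of "-r" "w - of_real U"] by simp
  then have "t \<in> upper_half_disc"
    using r_pos w y wU0 t45 by (simp add: divide_pos_pos upper_half_disc_def)
  have "W t = w" unfolding W_def t_def using wU0 r_pos by (simp add: field_simps)
  then have "g w - w - of_real h / (w - of_real U) = - (F t - of_real h * t) / of_real r"
    unfolding F_def t_def using r_pos wU0 by (simp add: field_simps)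
  then have "cmod (g w - w - of_real h / (w - of_real U)) = cmod (F t - of_real h * t) / r"
    using r_pos by (simp add: norm_divide norm_minus_commute)
  also have "\<dots> \<le> 200 * h * (cmod t)^2 / r"
    using F_quadratic[OF \<open>t \<in> upper_half_disc\<close> t45] r_pos by (simp add: divide_right_mono)
  also have "\<dots> = 200 * h * r / (cmod (w - of_real U))^2"
    unfolding t_norm using r_pos by (simp add: power2_eq_square field_simps)
  also have "\<dots> \<le> 200 * h * r / y^2"
    using wU y h_nonneg r_pos by (intro divide_left_mono power_mono mult_pos_pos) auto
  finally show ?thesis .
qed

lemma h_div_le:
  assumes "0 < y" "r \<le> y"
  shows "h / y \<le> 68 * r" and "200 * h * r / y^2 \<le> 13600 * r"
proof -
  have ry: "r / y \<le> 1" using assms by (simp add: divide_le_eq)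
  have "h / y \<le> 68 * r^2 / y" using h_le assms by (simp add: divide_right_mono)
  also have "\<dots> = 68 * r * (r / y)" by (simp add: power2_eq_square)
  also have "\<dots> \<le> 68 * r" using mult_left_mono[OF ry, of "68 * r"] r_pos by simp
  finally show "h / y \<le> 68 * r" .
  have "200 * h * r / y^2 \<le> 200 * (68 * r^2) * r / y^2"
    using h_le r_pos assms by (intro divide_right_mono mult_right_mono mult_left_mono) auto
  also have "\<dots> = 13600 * r * ((r / y) * (r / y))" by (simp add: power2_eq_square)
  also have "\<dots> \<le> 13600 * r * 1"
    using ry r_pos assms by (intro mult_left_mono mult_le_one) auto
  finally show "200 * h * r / y^2 \<le> 13600 * r" by simp
qed

lemma f_minus_id_bound:
  assumes z: "Im z > 0" and rz: "r \<le> 4/5 * Im z"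
  shows "cmod (f z - z) \<le> 13668 * r"
proof -
  define w where "w = f z"
  have "w \<in> D" and gw: "g w = z" using f_mem[OF z] unfolding w_def by auto
  have "Im z \<le> Im w" using Im_f_ge[OF z] unfolding w_def .
  then have wU: "Im z \<le> cmod (w - of_real U)" using abs_Im_le_cmod[of "w - of_real U"] by simp
  have "w - z = - (of_real h / (w - of_real U)) - (g w - w - of_real h / (w - of_real U))"
    unfolding gw by simp
  then have "cmod (w - z)
      \<le> cmod (of_real h / (w - of_real U)) + cmod (g w - w - of_real h / (w - of_real U))"
    by (metis norm_minus_cancel norm_triangle_ineq4)
  also have "cmod (of_real h / (w - of_real U)) \<le> h / Im z"
  proof -
    have "h / cmod (w - of_real U) \<le> h / Im z"
      using h_nonneg wU z by (intro divide_left_mono) (auto intro!: mult_pos_pos)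
    then show ?thesis using h_nonneg by (simp add: norm_divide)
  qed
  also have "cmod (g w - w - of_real h / (w - of_real U)) \<le> 200 * h * r / (Im z)^2"
    using g_error_estimate[OF \<open>w \<in> D\<close> \<open>Im z \<le> Im w\<close> z rz] .
  finally show ?thesis unfolding w_def using h_div_le[OF z] z rz r_pos by linarith
qed

lemma f_estimate:
  assumes z: "Im z > 0" and rz: "r \<le> 4/5 * Im z"
  shows "cmod (f z - z + of_real h / (z - of_real U)) \<le> 14000 * h * r / (Im z)^2"
proof -
  define y w where "y = Im z" and "w = f z"
  have y: "0 < y" "r \<le> 4/5 * y" using z rz unfolding y_def by auto
  have "w \<in> D" and gw: "g w = z" using f_mem[OF z] unfolding w_def by auto
  have "y \<le> Im w" using Im_f_ge[OF z] unfolding w_def y_def .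
  then have wU: "y \<le> cmod (w - of_real U)" using abs_Im_le_cmod[of "w - of_real U"] by simp
  have zU: "y \<le> cmod (z - of_real U)" using abs_Im_le_cmod[of "z - of_real U"] unfolding y_def
    by simp
  define E where "E = g w - w - of_real h / (w - of_real U)"
  have "f z - z + of_real h / (z - of_real U)
      = of_real h * (w - z) / ((w - of_real U) * (z - of_real U)) - E"
  proof -
    define a b where "a = w - of_real U" and "b = z - of_real U"
    have "a \<noteq> 0" "b \<noteq> 0" using wU zU y unfolding a_def b_def by auto
    then have "of_real h / b = of_real h * (a - b) / (a * b) + of_real h / a"
      by (simp add: field_simps)
    then show ?thesis unfolding E_def gw w_def[symmetric] a_def b_def by simp
  qed
  then have "cmod (f z - z + of_real h / (z - of_real U))
      \<le> cmod (of_real h * (w - z) / ((w - of_real U) * (z - of_real U))) + cmod E"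
    by (metis norm_triangle_ineq4)
  also have "cmod (of_real h * (w - z) / ((w - of_real U) * (z - of_real U)))
      = h * cmod (w - z) / (cmod (w - of_real U) * cmod (z - of_real U))"
    using h_nonneg by (simp add: norm_mult norm_divide)
  also have "\<dots> \<le> h * (13668 * r) / (y * y)"
    using f_minus_id_bound[OF z rz] wU zU y h_nonneg r_pos unfolding w_def
    by (intro frac_le mult_left_mono mult_mono) auto
  also have "cmod E \<le> 200 * h * r / y^2"
    unfolding E_def by (rule g_error_estimate[OF \<open>w \<in> D\<close> \<open>y \<le> Im w\<close> y])
  also have "h * (13668 * r) / (y * y) + 200 * h * r / y^2 = 13868 * h * r / y^2"
    by (simp add: power2_eq_square field_simps)
  also have "\<dots> \<le> 14000 * h * r / y^2"
    using h_nonneg r_pos y by (intro divide_right_mono mult_right_mono) auto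
  finally show ?thesis unfolding y_def by simp
qed

definition f_error where "f_error \<zeta> = f \<zeta> - \<zeta> + of_real h / (\<zeta> - of_real U)"

lemma holomorphic_f_error: "f_error holomorphic_on upper_half"
  unfolding f_error_def using holomorphic_f
  by (intro holomorphic_intros) (auto simp: upper_half_def complex_eq_iff)

lemma deriv_f_error:
  assumes "Im z > 0"
  shows "deriv f_error z = deriv f z - 1 - of_real h / (z - of_real U)^2"
proof (rule DERIV_imp_deriv)
  have "(f has_field_derivative deriv f z) (at z)"
    using holomorphic_f open_upper_half assms
      by (intro holomorphic_derivI[of f upper_half]) (auto simp: upper_half_def)
  moreover have "z - of_real U \<noteq> 0" using assms by (auto simp: complex_eq_iff)
  ultimately show
    "(f_error has_field_derivative (deriv f z - 1 - of_real h / (z - of_real U)^2)) (at z)"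
    unfolding f_error_def by (auto intro!: derivative_eq_intros simp: power2_eq_square field_simps)
qed

text \<open>Cauchy's inequality on the circle of radius \<open>Im z / 5\<close>, where \<open>f_estimate\<close> still applies.\<close>
lemma deriv_f_estimate:
  assumes z: "Im z > 0" and rz: "r \<le> 16/25 * Im z"
  shows "cmod (deriv f z - 1 - of_real h / (z - of_real U)^2) \<le> 109375 * h * r / (Im z)^3"
proof -
  define y where "y = Im z"
  have y: "y > 0" "r \<le> 16/25 * y" using z rz unfolding y_def by auto
  define \<rho> where "\<rho> = y / 5"
  have Im_near: "4/5 * y \<le> Im \<zeta>" if "cmod (z - \<zeta>) \<le> \<rho>" for \<zeta>
    using abs_Im_le_cmod[of "z - \<zeta>"] that unfolding \<rho>_def y_def by simp
  have "cball z \<rho> \<subseteq> upper_half"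
    using Im_near y by (force simp: upper_half_def dist_norm)
  then have "cmod ((deriv ^^ 1) f_error z) \<le> fact 1 * (14000 * h * r / (16/25 * y^2)) / \<rho>^1"
  proof (intro Cauchy_inequality)
    show "f_error holomorphic_on ball z \<rho>" "continuous_on (cball z \<rho>) f_error"
      using holomorphic_f_error \<open>cball z \<rho> \<subseteq> upper_half\<close> ball_subset_cball
      by (blast intro: holomorphic_on_subset holomorphic_on_imp_continuous_on)+
    fix \<zeta> assume "cmod (z - \<zeta>) = \<rho>"
    then have \<zeta>: "4/5 * y \<le> Im \<zeta>" using Im_near by simp
    then have "cmod (f_error \<zeta>) \<le> 14000 * h * r / (Im \<zeta>)^2"
      unfolding f_error_def using y by (intro f_estimate) auto
    also have "\<dots> \<le> 14000 * h * r / (16/25 * y^2)"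
    proof (rule divide_left_mono)
      have "(4/5 * y)^2 \<le> (Im \<zeta>)^2" using \<zeta> y by (intro power_mono) auto
      then show "16/25 * y^2 \<le> (Im \<zeta>)^2" by (simp add: power2_eq_square)
    qed (use h_nonneg r_pos \<zeta> y in auto)
    finally show "cmod (f_error \<zeta>) \<le> 14000 * h * r / (16/25 * y^2)" .
  qed (use y in \<open>simp add: \<rho>_def\<close>)
  also have "fact 1 * (14000 * h * r / (16/25 * y^2)) / \<rho>^1 = 109375 * h * r / y^3"
    unfolding \<rho>_def using y by (simp add: field_simps power2_eq_square power3_eq_cube)
  finally show ?thesis using deriv_f_error[OF z] unfolding y_def by simp
qed

lemma estimates_above_quarter_power:
  assumes "r < 1/2" and z: "r powr (1/4) \<le> Im z"
  shows "cmod (f z - z + of_real h / (z - of_real U)) \<le> 110000 * h * (r powr (1/4))^2"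
    and "cmod (deriv f z - 1 - of_real h / (z - of_real U)^2) \<le> 110000 * h * r powr (1/4)"
    and "\<bar>Im (f z) - Im z * (1 + h / (cmod (z - of_real U))^2)\<bar> \<le> 110000 * Im z * h * r powr (1/4)"
proof -
  define \<delta> where "\<delta> = r powr (1/4)"
  have \<delta>: "0 < \<delta>" "\<delta>^4 = r" "r \<le> 16/25 * \<delta>"
    using quarter_power_facts[OF r_pos assms(1)] unfolding \<delta>_def by auto
  have y: "\<delta> \<le> Im z" "0 < Im z" using z \<delta>(1) unfolding \<delta>_def by linarith+
  have "cmod (f z - z + of_real h / (z - of_real U)) \<le> 14000 * h * r / (Im z)^2"
    using y \<delta> by (intro f_estimate) auto
  also have "\<dots> \<le> 14000 * h * r / \<delta>^2"
    using h_nonneg r_pos \<delta> y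
      by (intro divide_left_mono power_mono mult_nonneg_nonneg mult_pos_pos) auto
  also have "\<dots> = 14000 * h * \<delta> * \<delta>"
    using \<delta> by (simp add: \<delta>(2)[symmetric] power2_eq_square field_simps eval_nat_numeral)
  finally have error: "cmod (f z - z + of_real h / (z - of_real U)) \<le> 14000 * h * \<delta> * \<delta>" .
  also have "\<dots> \<le> 110000 * h * \<delta> * \<delta>" using h_nonneg \<delta> by (intro mult_right_mono) auto
  finally show "cmod (f z - z + of_real h / (z - of_real U)) \<le> 110000 * h * (r powr (1/4))^2"
    unfolding \<delta>_def[symmetric] by (simp add: power2_eq_square mult.assoc)
  have "\<bar>Im (f z) - Im z * (1 + h / (cmod (z - of_real U))^2)\<bar> \<le> 14000 * h * \<delta> * \<delta>"
    unfolding Im_mapping_error using abs_Im_le_cmod error by (rule order_trans)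
  also have "\<dots> \<le> 14000 * h * \<delta> * Im z" using h_nonneg \<delta> y by (intro mult_left_mono) auto
  also have "\<dots> \<le> 110000 * h * \<delta> * Im z" using h_nonneg \<delta> y by (intro mult_right_mono) auto
  finally show
    "\<bar>Im (f z) - Im z * (1 + h / (cmod (z - of_real U))^2)\<bar> \<le> 110000 * Im z * h * r powr (1/4)"
    unfolding \<delta>_def[symmetric] by (simp add: ac_simps)
  have "cmod (deriv f z - 1 - of_real h / (z - of_real U)^2) \<le> 109375 * h * r / (Im z)^3"
    using y \<delta> by (intro deriv_f_estimate) auto
  also have "\<dots> \<le> 109375 * h * r / \<delta>^3"
    using h_nonneg r_pos \<delta> y
      by (intro divide_left_mono power_mono mult_nonneg_nonneg mult_pos_pos) auto
  also have "\<dots> = 109375 * h * \<delta>"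
    using \<delta> by (simp add: \<delta>(2)[symmetric] power3_eq_cube field_simps eval_nat_numeral)
  also have "\<dots> \<le> 110000 * h * \<delta>" using h_nonneg \<delta> by (intro mult_right_mono) auto
  finally show "cmod (deriv f z - 1 - of_real h / (z - of_real U)^2) \<le> 110000 * h * r powr (1/4)"
    unfolding \<delta>_def .
qed

end

section \<open>Hulls\<close>

lemma hull_norm_le: assumes "is_hull K" "k \<in> K" shows "cmod k \<le> hull_rad K"
proof -
  have "bounded K" using assms(1) unfolding is_hull_def by simp
  then have "bdd_above (norm ` K)" by (simp add: bounded_imp_bdd_above bounded_norm_comp)
  then show ?thesis unfolding hull_rad_def using assms(2) by (auto intro: cSup_upper)
qed

lemma hull_rad_pos: assumes "is_hull K" "K \<noteq> {}" shows "0 < hull_rad K"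
proof -
  obtain k where k: "k \<in> K" using assms(2) by blast
  then have "Im k > 0" using assms(1) unfolding is_hull_def upper_half_def by auto
  then have "cmod k > 0" by auto
  then show ?thesis using hull_norm_le[OF assms(1) k] by linarith
qed

lemma translate_mem: "w \<in> translate_hull K U \<longleftrightarrow> w - of_real U \<in> K"
  unfolding translate_hull_def by (auto simp: image_iff) (metis diff_add_cancel)

lemma open_hull_complement: assumes "is_hull K" shows "open (upper_half - translate_hull K U)"
proof -
  obtain C where C: "closed C" "K = upper_half \<inter> C"
    using assms unfolding is_hull_def closedin_closed by blast
  have eq: "upper_half - translate_hull K U = upper_half \<inter> ((\<lambda>w. w - of_real U) -` (- C))"
    using C(2) by (auto simp: translate_mem upper_half_def)
  have "open ((\<lambda>w. w - of_real U) -` (- C))"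
    using C(1) by (intro open_vimage) (auto intro: continuous_intros)
  then show ?thesis unfolding eq using open_upper_half by (intro open_Int)
qed

lemma normalized_mapping_out_hull:
  assumes hull: "is_hull K" and map: "mapping_out (translate_hull K U) g h"
    and r0: "hull_rad K \<le> r0" "0 < r0" "r0 < 1"
  shows "normalized_mapping_out (upper_half - translate_hull K U) g h U r0"
proof
  show "open (upper_half - translate_hull K U)" by (rule open_hull_complement[OF hull])
  show "upper_half - translate_hull K U \<subseteq> upper_half" by auto
  show "0 < r0" "r0 < 1" by fact+
  fix w assume w: "Im w > 0" "r0 < cmod (w - of_real U)"
  have "w - of_real U \<notin> K" using hull_norm_le[OF hull] w r0 by fastforce
  then show "w \<in> upper_half - translate_hull K U" using w
    by (auto simp: translate_mem upper_half_def)
qed (use map in \<open>auto simp: mapping_out_def bij_betw_def\<close>)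

lemma empty_hull_mapping_out:
  assumes hull: "is_hull {}" and map: "mapping_out (translate_hull {} U) g h"
  defines "f \<equiv> inv_into (upper_half - translate_hull {} U) g"
  shows "h = 0" and "\<And>w. 0 < Im w \<Longrightarrow> f w = w" and "\<And>w. 0 < Im w \<Longrightarrow> deriv f w = 1"
proof -
  text \<open>The empty hull fits in every half disc, so the estimates hold for every radius.\<close>
  have inst: "normalized_mapping_out (upper_half - translate_hull {} U) g h U r"
    if "0 < r" "r < 1" for r
    by (rule normalized_mapping_out_hull[OF hull map]) (use that in \<open>auto simp: hull_rad_def\<close>)
  have "h \<le> 0 + e" if "e > 0" for e
  proof -
    define r where "r = min (1/2) (e / 68)"
    have r: "0 < r" "r < 1" "r \<le> e / 68" unfolding r_def using that by auto
    have "r^2 \<le> r" using r by (simp add: power2_eq_square mult_le_cancel_right1 mult_left_le)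
    then show ?thesis using normalized_mapping_out.h_le[OF inst[OF r(1,2)]] r by linarith
  qed
  then have "h \<le> 0" by (rule field_le_epsilon)
  then show h0: "h = 0" using normalized_mapping_out.h_nonneg[OF inst[of "1/2"]] by simp
  show fid: "f w = w" if "0 < Im w" for w
  proof -
    define r where "r = min (1/2) (4/5 * Im w)"
    have r: "0 < r" "r < 1" "r \<le> 4/5 * Im w" unfolding r_def using that by auto
    show ?thesis
      using normalized_mapping_out.f_estimate[OF inst[OF r(1,2)] that r(3)] h0
      unfolding f_def normalized_mapping_out.f_def[OF inst[OF r(1,2)]] by simp
  qed
  show "deriv f w = 1" if "0 < Im w" for w
  proof (rule DERIV_imp_deriv, rule has_field_derivative_transform_within_open)
    show "((\<lambda>w. w) has_field_derivative 1) (at w)" by simp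
  qed (use that fid open_upper_half in \<open>auto simp: upper_half_def\<close>)
qed

lemma hull_mapping_out_estimates:
  assumes hull: "is_hull K" and r12: "hull_rad K < 1/2"
    and map: "mapping_out (translate_hull K U) g h" and z: "0 < Im z"
  defines "f \<equiv> inv_into (upper_half - translate_hull K U) g" and "\<delta> \<equiv> hull_rad K powr (1/4)"
  shows "Im z \<le> Im (f z)"
    and "\<delta> \<le> Im z \<Longrightarrow> norm (f z - z + of_real h / (z - of_real U)) \<le> 110000 * h * \<delta>^2"
    and "\<delta> \<le> Im z \<Longrightarrow> norm (deriv f z - 1 - of_real h / (z - of_real U)^2) \<le> 110000 * h * \<delta>"
    and "\<delta> \<le> Im z \<Longrightarrow> \<bar>Im (f z) - Im z * (1 + h / (cmod (z - of_real U))^2)\<bar> \<le> 110000 * Im z * h * \<delta>"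
proof -
  consider "K = {}" | "K \<noteq> {}" by blast
  then have "Im z \<le> Im (f z) \<and>
    (\<delta> \<le> Im z \<longrightarrow> norm (f z - z + of_real h / (z - of_real U)) \<le> 110000 * h * \<delta>^2 \<and>
      norm (deriv f z - 1 - of_real h / (z - of_real U)^2) \<le> 110000 * h * \<delta> \<and>
      \<bar>Im (f z) - Im z * (1 + h / (cmod (z - of_real U))^2)\<bar> \<le> 110000 * Im z * h * \<delta>)"
  proof cases
    case 1
    then show ?thesis using empty_hull_mapping_out[of U g h] hull map z unfolding f_def by simp
  next
    case 2
    interpret M: normalized_mapping_out "upper_half - translate_hull K U" g h U "hull_rad K"
      by (rule normalized_mapping_out_hull[OF hull map]) (use hull_rad_pos[OF hull 2] r12 in auto)
    have "f = M.f" unfolding f_def M.f_def ..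
    then show ?thesis
      using M.Im_f_ge[OF z] M.estimates_above_quarter_power[OF r12] unfolding \<delta>_def by simp
  qed
  then show "Im z \<le> Im (f z)"
    and "\<delta> \<le> Im z \<Longrightarrow> norm (f z - z + of_real h / (z - of_real U)) \<le> 110000 * h * \<delta>^2"
    and "\<delta> \<le> Im z \<Longrightarrow> norm (deriv f z - 1 - of_real h / (z - of_real U)^2) \<le> 110000 * h * \<delta>"
    and "\<delta> \<le> Im z \<Longrightarrow> \<bar>Im (f z) - Im z * (1 + h / (cmod (z - of_real U))^2)\<bar> \<le> 110000 * Im z * h * \<delta>"
    by auto
qed

theorem lemma2p5:
  "\<exists>c::real. \<forall>U K g h z.
     is_hull K \<longrightarrow> hull_rad K < 1/2 \<longrightarrow>
     mapping_out (translate_hull K U) g h \<longrightarrow> Im z > 0 \<longrightarrow>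
     (let f = inv_into (upper_half - translate_hull K U) g;
          r = hull_rad K; \<delta> = r powr (1/4); y = Im z in
        Im (f z) \<ge> y \<and>
        (y \<ge> \<delta> \<longrightarrow>
           norm (f z - z + of_real h / (z - of_real U)) \<le> c * h * \<delta>^2 \<and>
           norm (deriv f z - 1 - of_real h / (z - of_real U)^2) \<le> c * h * \<delta> \<and>
           \<bar>Im (f z) - y * (1 + h / (cmod (z - of_real U))^2)\<bar> \<le> c * y * h * \<delta>))"
  by (intro exI[of _ 110000] allI impI, unfold Let_def, intro conjI impI)
    (rule hull_mapping_out_estimates; assumption)+

end
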